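(* Let $(X,\rho)$ be a separable metric space and let $T\colon X\to X$ be an aperiodic Borel automorphism. Then there exist a metrically universal Borel subset $\widehat X\subset X$ and a Borel measurable injective map $\Phi\colon \widehat X\to \mathcal{T}(\mathrm{UA})$ into the path space of the uniadic graph $\mathrm{UA}$ such that the adic shift $S$ is defined at every point of $\Phi(\widehat X)$ and $\Phi(Tx)=S(\Phi(x))$ for all $x\in\widehat X$.
   Context: A Borel automorphism of $X$ is an invertible map $T\colon X\to X$ such that $T$ and $T^{-1}$ are Borel measurable; it is aperiodic if it has no periodic points. $M_{\mathrm{ap}}(X,T)$ denotes the set of $T$-invariant aperiodic Borel probability measures on $X$ (i.e. invariant probability measures giving measure zero to the set of $T$-periodic points). A Borel set $\widehat X\subset X$ is metrically universal if $\mu(\widehat X)=1$ for every $\mu\in M_{\mathrm{ap}}(X,T)$. Graded graphs and adic shift: a graded graph has vertex set $\bigsqcup_{n\ge0}V_n$ with $V_0$ a single vertex, each $V_n$ finite, and (possibly multiple) edges only between $V_n$ and $V_{n+1}$; an adic structure is a linear order on the set of edges entering each vertex of level $n\ge1$ from level $n-1$. The path space $\mathcal{T}(\Gamma)$ is the set of infinite paths starting at the vertex of level $0$, going through one vertex of each level (a path is a sequence of edges $e_1,e_2,\dots$ with $e_n$ from level $n-1$ to level $n$), with the product Borel structure. Two paths are tail-equivalent if they coincide from some level on; on a tail-equivalence class the adic order is: for distinct paths $p,q$ coinciding after level $n$, with $n$ the largest level where they differ, $p<q$ iff the edge of $p$ entering its vertex at level $n$ is smaller than that of $q$ (they enter the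 same vertex, recursively compared; equivalently, compare lexicographically from the top differing level). The adic shift $S$ maps a path to its immediate successor in the adic order, defined on paths that are not maximal. The uniadic graph $\mathrm{UA}$: $V_0$ is a single vertex; given $V_n$, set $V_{n+1}=V_n^2\sqcup \mathrm{copy}(V_n)$. Each $w=(u,v)\in V_n^2$ receives two edges, from $u$ and from $v$, with the edge from $v$ declared greater than the edge from $u$; each $w\in\mathrm{copy}(V_n)$, a copy of $u\in V_n$, receives a single edge from $u$. *)

theory Defs
  imports "HOL-Analysis.Analysis" "HOL-Probability.Probability"
begin

definition borel_automorphism :: "('a::topological_space \<Rightarrow> 'a) \<Rightarrow> bool" where
  "borel_automorphism T \<longleftrightarrow> bij T \<and> T \<in> borel_measurable borel \<and> inv T \<in> borel_measurable borel"

definition periodic_points :: "('a \<Rightarrow> 'a) \<Rightarrow> 'a set" where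
  "periodic_points T = {x. \<exists>n>0. (T ^^ n) x = x}"

definition aperiodic :: "('a \<Rightarrow> 'a) \<Rightarrow> bool" where
  "aperiodic T \<longleftrightarrow> periodic_points T = {}"

definition M_ap :: "('a::topological_space \<Rightarrow> 'a) \<Rightarrow> 'a measure set" where
  "M_ap T = {M. sets M = sets borel \<and> prob_space M
               \<and> (\<forall>A\<in>sets borel. emeasure M (T -` A) = emeasure M A)
               \<and> emeasure M (periodic_points T) = 0}"

definition metrically_universal :: "('a::topological_space \<Rightarrow> 'a) \<Rightarrow> 'a set \<Rightarrow> bool" where
  "metrically_universal T Y \<longleftrightarrow> Y \<in> sets borel \<and> (\<forall>M\<in>M_ap T. emeasure M Y = 1)"

text \<open>Vertices: Root (level 0); Pair u v is the vertex (u,v) of V_n^2 at level n+1;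
  Cp u is the copy of u at level n+1.\<close>
datatype uavert = Root | Pair uavert uavert | Cp uavert

fun UA_level :: "nat \<Rightarrow> uavert set" where
  "UA_level 0 = {Root}"
| "UA_level (Suc n) = {Pair u v | u v. u \<in> UA_level n \<and> v \<in> UA_level n} \<union> {Cp u | u. u \<in> UA_level n}"

text \<open>An edge is identified by its target vertex and a label among the edges entering it:
  into Pair u v, label False is the edge from u and label True the (greater) edge from v;
  into Cp u, the single edge (label False) comes from u.  The adic order on edges entering
  a vertex is the order on labels (False < True).\<close>
type_synonym uaedge = "uavert \<times> bool"

fun valid_label :: "uavert \<Rightarrow> bool \<Rightarrow> bool" where
  "valid_label (Pair u v) l = True"
| "valid_label (Cp u) l = (\<not> l)"
| "valid_label Root l = False"

fun edge_src :: "uaedge \<Rightarrow> uavert" where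
  "edge_src (Pair u v, l) = (if l then v else u)"
| "edge_src (Cp u, l) = u"
| "edge_src (Root, l) = Root"

text \<open>Paths: p k is the edge from level k to level k+1.\<close>
definition UA_paths :: "(nat \<Rightarrow> uaedge) set" where
  "UA_paths = {p. (\<forall>k. fst (p k) \<in> UA_level (Suc k) \<and> valid_label (fst (p k)) (snd (p k))
                      \<and> edge_src (p (Suc k)) = fst (p k))
                 \<and> edge_src (p 0) = Root}"

definition UA_path_space :: "(nat \<Rightarrow> uaedge) measure" where
  "UA_path_space = restrict_space (PiM UNIV (\<lambda>_. count_space UNIV)) UA_paths"

definition adic_less :: "(nat \<Rightarrow> uaedge) \<Rightarrow> (nat \<Rightarrow> uaedge) \<Rightarrow> bool" where
  "adic_less p q \<longleftrightarrow> (\<exists>j. p j \<noteq> q j \<and> (\<forall>k>j. p k = q k) \<and> snd (p j) < snd (q j))"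

definition adic_dom :: "(nat \<Rightarrow> uaedge) set" where
  "adic_dom = {p \<in> UA_paths. \<exists>q\<in>UA_paths. adic_less p q}"

definition adic_shift :: "(nat \<Rightarrow> uaedge) \<Rightarrow> (nat \<Rightarrow> uaedge)" where
  "adic_shift p = (THE q. q \<in> UA_paths \<and> adic_less p q
                      \<and> \<not> (\<exists>r\<in>UA_paths. adic_less p r \<and> adic_less r q))"

end

theory Submission
  imports Defs "HOL-Library.Nat_Bijection" "HOL-Library.Countable"
begin

text \<open>
  Fix countably many Borel sets \<open>U k\<close> separating points. Starting from the whole space, a
  decreasing sequence of marker sets is thinned out: at step \<open>g\<close> a marker is dropped when it
  lies outside \<open>U k\<close> (\<open>k\<close> the first coordinate of \<open>g\<close>) while the preceding marker lies in
  \<open>U k\<close>. Two consecutive markers are never dropped together, so at step \<open>g\<close> consecutive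
  markers are at most \<open>2^g\<close> apart. The orbits meeting the intersection of all marker sets or
  one of the sets of last markers form a wandering, hence invariantly null, set; its complement
  is \<open>X\<^sub>h\<close>. Refining each step into finitely many stages, which drop the markers according
  to their pattern of visits to the \<open>U k\<close> nearby, cuts every orbit in \<open>X\<^sub>h\<close> into nested
  blocks, each block of a stage being a block of the previous stage or the union of two adjacent
  ones: exactly the two kinds of vertices of UA. The image of \<open>x\<close> is the path of the shapes of
  the blocks containing \<open>x\<close>, labelled by whether \<open>x\<close> lies in the right half. \<open>T\<close> moves \<open>x\<close> to
  the next point of its blocks, which is the adic successor; and the shapes determine the visits
  of the orbit to the bases, hence the patterns, hence the visits to the \<open>U k\<close>, which gives
  injectivity.
\<close>

lemma ex_least_pos: assumes "\<exists>i::nat. 0 < i \<and> P i"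
  shows "\<exists>d. 0 < d \<and> P d \<and> (\<forall>d'. 0 < d' \<and> d' < d \<longrightarrow> \<not> P d')"
proof -
  obtain d where "0 < d \<and> P d" "\<forall>m<d. \<not> (0 < m \<and> P m)"
    using exists_least_iff[of "\<lambda>i. 0 < i \<and> P i"] assms by blast
  then show ?thesis by blast
qed

lemma ex_least: assumes "\<exists>i::nat. P i"
  shows "\<exists>d. P d \<and> (\<forall>d'. d' < d \<longrightarrow> \<not> P d')"
  using assms exists_least_iff[of P] by blast

lemma measurable_funpow: "f \<in> M \<rightarrow>\<^sub>M M \<Longrightarrow> f ^^ n \<in> M \<rightarrow>\<^sub>M M"
  by (induction n) (auto intro: measurable_compose)

lemma set_encode_less_power: assumes "B \<subseteq> {..<k}" shows "set_encode B < 2 ^ k"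
proof -
  have "set_encode B \<le> (\<Sum>i<k. 2 ^ i)"
    unfolding set_encode_def by (rule sum_mono2) (use assms in auto)
  also have "\<dots> < 2 ^ k" using sum_power2[of k] by (simp add: atLeast0LessThan)
  finally show ?thesis .
qed

lemma measurable_filter_finite:
  assumes I: "finite I" and P: "\<And>z. z \<in> I \<Longrightarrow> {x \<in> space M. P z x} \<in> sets M"
  shows "(\<lambda>x. {z \<in> I. P z x}) \<in> M \<rightarrow>\<^sub>M count_space (Pow I)"
proof -
  have "(\<lambda>x. {z \<in> I. P z x}) -` {B} \<inter> space M \<in> sets M" if "B \<subseteq> I"
    for B
  proof -
    have "(\<lambda>x. {z \<in> I. P z x}) -` {B} \<inter> space M = {x \<in> space M. \<forall>z\<in>I. z \<in> B \<longleftrightarrow> P z x}"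
      using that by blast
    also have "\<dots> \<in> sets M"
    proof (rule sets.sets_Collect_finite_All[OF _ I])
      fix z assume "z \<in> I"
      then show "{x \<in> space M. z \<in> B \<longleftrightarrow> P z x} \<in> sets M"
        using P by (cases "z \<in> B") (auto intro: sets.sets_Collect_neg)
    qed
    finally show ?thesis .
  qed
  then show ?thesis using I by (auto simp: measurable_count_space_eq2)
qed

lemma measurable_count_space_app2:
  fixes f :: "'a \<Rightarrow> 'b::countable" and g :: "'a \<Rightarrow> 'c::countable"
  assumes f: "f \<in> measurable M (count_space UNIV)" and g: "g \<in> measurable M (count_space UNIV)"
  shows "(\<lambda>x. h (f x) (g x)) \<in> measurable M (count_space UNIV)"
proof -
  have "(\<lambda>x. (\<lambda>u x. h u (g x)) (f x) x) \<in> measurable M (count_space UNIV)"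
  proof (rule measurable_compose_countable'[OF _ f])
    fix u
    have "(\<lambda>x. (\<lambda>v x. h u v) (g x) x) \<in> measurable M (count_space UNIV)"
      by (rule measurable_compose_countable'[OF _ g]) simp_all
    then show "(\<lambda>x. h u (g x)) \<in> measurable M (count_space UNIV)" by simp
  qed simp
  then show ?thesis by simp
qed

lemma separable_separating_opens:
  assumes "separable_space (euclidean :: 'a::metric_space topology)"
  shows "\<exists>U::nat \<Rightarrow> 'a set. (\<forall>k. open (U k)) \<and> (\<forall>x y. x \<noteq> y \<longrightarrow> (\<exists>k. x \<in> U k \<and> y \<notin> U k))"
proof -
  obtain C :: "'a set" where C: "countable C" "closure C = UNIV"
    using assms unfolding separable_space_def by auto
  define U where
    "U k = ball (from_nat_into C (fst (prod_decode k)))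
      (1 / real (Suc (snd (prod_decode k))))" for k
  have "\<exists>k. x \<in> U k \<and> y \<notin> U k" if "x \<noteq> y" for x y
  proof -
    obtain m :: nat where m: "1 / real (Suc m) < dist x y / 2"
      using nat_approx_posE[of "dist x y / 2"] \<open>x \<noteq> y\<close> by auto
    define r where "r = 1 / real (Suc m)"
    have "0 < r" unfolding r_def by simp
    then obtain c where c: "c \<in> C" "dist c x < r"
      using closure_approachable[of x C] C(2) by blast
    obtain i where "from_nat_into C i = c" using from_nat_into_surj[OF C(1) c(1)] by blast
    then have Uk: "U (prod_encode (i, m)) = ball c r" unfolding U_def r_def by simp
    have "dist x y \<le> dist c x + dist c y" by (rule dist_triangle3)
    then have "y \<notin> ball c r" using c(2) m unfolding r_def by simp
    moreover have "x \<in> ball c r" using c(2) by (simp add: dist_commute)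
    ultimately show ?thesis unfolding Uk[symmetric] by blast
  qed
  moreover have "\<forall>k. open (U k)" unfolding U_def by simp
  ultimately show ?thesis by blast
qed

lemma (in prob_space) prob_eq_0_if_disjoint_copies:
  fixes D :: "nat \<Rightarrow> 'a set"
  assumes events: "\<And>n. D n \<in> events" and disj: "disjoint_family D" and eq: "\<And>n. prob (D n) = p"
  shows "p = 0"
proof -
  have bound: "real n * p \<le> 1" for n
  proof -
    have "real n * p = prob (\<Union>i<n. D i)"
      using events disj eq by (subst measure_finite_Union) (auto simp: disjoint_family_on_def)
    then show ?thesis by simp
  qed
  have "0 \<le> p" using eq[of 0] by (metis measure_nonneg)
  moreover have "\<not> 0 < p"
  proof
    assume "0 < p"
    obtain n :: nat where "1 / p < real n" using reals_Archimedean2 by blast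
    then show False using bound[of n] \<open>0 < p\<close> by (simp add: field_simps)
  qed
  ultimately show ?thesis by simp
qed

section \<open>Paths of the uniadic graph\<close>

instance uavert :: countable by countable_datatype

text \<open>A vertex \<open>v\<close> of UA is read as a tower of \<open>dim v\<close> floors, one for each path from the root
  to \<open>v\<close>, ordered adically. For \<open>v\<close> of level \<open>k\<close> and \<open>m \<le> k\<close>, \<open>base_positions k m v\<close> is the set
  of floors at which a tower of level \<open>m\<close> starts, and \<open>path_position p k\<close> is the floor of the
  initial segment of length \<open>k\<close> of \<open>p\<close>.\<close>

fun dim :: "uavert \<Rightarrow> nat" where
  "dim Root = 1"
| "dim (Pair u v) = dim u + dim v"
| "dim (Cp u) = dim u"

lemma dim_pos: "0 < dim v" by (induction v) auto

fun base_positions :: "nat \<Rightarrow> nat \<Rightarrow> uavert \<Rightarrow> nat set" where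
  "base_positions 0 m v = {0}"
| "base_positions (Suc k) m v =
     (if m = Suc k then {0} else
      case v of
        Pair u w \<Rightarrow> base_positions k m u \<union> (\<lambda>r. dim u + r) ` base_positions k m w
      | Cp u \<Rightarrow> base_positions k m u
      | Root \<Rightarrow> {})"

lemma base_positions_less_dim: "r \<in> base_positions k m v \<Longrightarrow> r < dim v"
proof (induction k arbitrary: v r)
  case 0 then show ?case using dim_pos by simp
next
  case (Suc k)
  show ?case
  proof (cases "m = Suc k")
    case True then show ?thesis using Suc.prems dim_pos by simp
  next
    case False
    then show ?thesis using Suc by (cases v) fastforce+
  qed
qed

fun left_factor :: "uavert \<Rightarrow> uavert" where
  "left_factor (Pair u v) = u"
| "left_factor _ = Root"

fun path_position :: "(nat \<Rightarrow> uaedge) \<Rightarrow> nat \<Rightarrow> nat" where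
  "path_position p 0 = 0"
| "path_position p (Suc k) =
     path_position p k + (if snd (p k) then dim (left_factor (fst (p k))) else 0)"

definition left_edge :: "(nat \<Rightarrow> uaedge) \<Rightarrow> nat \<Rightarrow> bool" where
  "left_edge p k \<longleftrightarrow> (\<exists>u v. fst (p k) = Pair u v) \<and> \<not> snd (p k)"

lemma UA_paths_vertex_eq_above:
  assumes "p \<in> UA_paths" "q \<in> UA_paths" "\<forall>k>j. p k = q k"
  shows "fst (p j) = fst (q j)"
proof -
  have "edge_src (p (Suc j)) = fst (p j)" "edge_src (q (Suc j)) = fst (q j)"
    using assms(1,2) unfolding UA_paths_def by auto
  then show ?thesis using assms(3) by simp
qed

lemma UA_paths_True_label: assumes "p \<in> UA_paths" "snd (p k)"
  shows "\<exists>u v. fst (p k) = Pair u v"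
proof -
  have "valid_label (fst (p k)) (snd (p k))" using assms(1) unfolding UA_paths_def by auto
  then show ?thesis using assms(2) by (cases "fst (p k)") auto
qed

lemma adic_less_total:
  assumes p: "p \<in> UA_paths" and q: "q \<in> UA_paths" and ne: "p \<noteq> q" and tail: "\<forall>k>j. p k = q k"
  shows "adic_less p q \<or> adic_less q p"
proof -
  have "{k. p k \<noteq> q k} \<subseteq> {..j}" using tail by (auto simp: not_le[symmetric])
  then have fin: "finite {k. p k \<noteq> q k}" using finite_subset by blast
  define m where "m = Max {k. p k \<noteq> q k}"
  have m: "p m \<noteq> q m" using Max_in[OF fin] ne unfolding m_def by auto
  have above: "\<forall>k>m. p k = q k" using Max_ge[OF fin] unfolding m_def by force
  have "fst (p m) = fst (q m)" using UA_paths_vertex_eq_above[OF p q above] .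
  then have "snd (p m) < snd (q m) \<or> snd (q m) < snd (p m)"
    using m by (auto simp: prod_eq_iff)
  then show ?thesis
  proof
    assume "snd (p m) < snd (q m)"
    then show ?thesis unfolding adic_less_def using m above by blast
  next
    assume "snd (q m) < snd (p m)"
    then show ?thesis unfolding adic_less_def using m above by (metis (full_types))
  qed
qed

lemma adic_less_between_impossible:
  assumes p: "p \<in> UA_paths" and r: "r \<in> UA_paths"
    and pj: "fst (p j) = Pair u v" "\<not> snd (p j)" and qj: "q j = (Pair u v, True)"
    and above: "\<forall>k>j. q k = p k" and below: "\<forall>k<j. \<not> left_edge p k"
    and qbelow: "\<forall>k<j. \<not> snd (q k)"
  shows "\<not> (adic_less p r \<and> adic_less r q)"
proof
  assume "adic_less p r \<and> adic_less r q"
  then obtain j1 j2 where j1: "p j1 \<noteq> r j1" "\<forall>k>j1. p k = r k" "snd (p j1) < snd (r j1)"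
    and j2: "r j2 \<noteq> q j2" "\<forall>k>j2. r k = q k" "snd (r j2) < snd (q j2)"
    unfolding adic_less_def by blast
  consider "j < j1" | "j1 = j" | "j1 < j" by linarith
  then show False
  proof cases
    case 1
    then have "q j1 = p j1" using above by simp
    moreover have "j2 = j1"
      using j1(1,2) j2(1,2) above 1 \<open>q j1 = p j1\<close>
        by (metis linorder_neqE_nat less_trans)
    ultimately show False using j1(3) j2(3) by (cases "snd (p j1)"; cases "snd (r j1)") auto
  next
    case 2
    have "snd (r j)" using j1(3) 2 by (cases "snd (r j)") auto
    moreover have "fst (r j) = fst (p j)" using UA_paths_vertex_eq_above[OF r p, of j] j1(2) 2
    by simp
    ultimately have "r j = q j" using pj qj by (simp add: prod_eq_iff)
    then have "\<forall>k\<ge>j. r k = q k" using above j1(2) 2 by (metis le_eq_less_or_eq)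
    then have "j2 < j" using j2(1) by (meson not_le)
    then show False using j2(3) qbelow by simp
  next
    case 3
    have "snd (r j1)" "\<not> snd (p j1)" using j1(3) by auto
    then obtain u' v' where "fst (r j1) = Pair u' v'" using UA_paths_True_label[OF r] by blast
    moreover have "fst (r j1) = fst (p j1)" using UA_paths_vertex_eq_above[OF r p, of j1] j1(2)
    by simp
    ultimately have "left_edge p j1" using \<open>\<not> snd (p j1)\<close> unfolding left_edge_def by auto
    then show False using below 3 by simp
  qed
qed

text \<open>The successor of a path leaving a vertex \<open>Pair u v\<close> through its left edge and taking only
  maximal edges below: it leaves through the right edge instead and takes only minimal edges below.\<close>

lemma adic_shift_eqI:
  assumes p: "p \<in> UA_paths" and q: "q \<in> UA_paths"
    and pj: "fst (p j) = Pair u v" "\<not> snd (p j)" and qj: "q j = (Pair u v, True)"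
    and above: "\<forall>k>j. q k = p k" and below: "\<forall>k<j. \<not> left_edge p k"
    and qbelow: "\<forall>k<j. \<not> snd (q k)"
  shows "p \<in> adic_dom" "adic_shift p = q"
proof -
  have pq: "adic_less p q" unfolding adic_less_def
    using pj qj above by (intro exI[of _ j]) (auto simp: prod_eq_iff)
  then show "p \<in> adic_dom" unfolding adic_dom_def using p q by auto
  have nobetween: "\<not> (\<exists>r\<in>UA_paths. adic_less p r \<and> adic_less r q)"
    using adic_less_between_impossible[OF p _ pj qj above below qbelow] by blast
  show "adic_shift p = q" unfolding adic_shift_def
  proof (rule the_equality)
    show "q \<in> UA_paths \<and> adic_less p q \<and> \<not> (\<exists>r\<in>UA_paths. adic_less p r \<and> adic_less r q)"
      using q pq nobetween by simp
    fix q'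
    assume q': "q' \<in> UA_paths \<and> adic_less p q' \<and> \<not> (\<exists>r\<in>UA_paths. adic_less p r \<and> adic_less r q')"
    then obtain j' where "\<forall>k>j'. p k = q' k" unfolding adic_less_def by blast
    then have "\<forall>k>max j j'. q' k = q k" using above by simp
    then show "q' = q" using adic_less_total[of q' q] q' pq nobetween q by blast
  qed
qed

section \<open>The \<open>\<int>\<close>-action and invariant measures\<close>

locale marker_construction =
  fixes T :: "'a::topological_space \<Rightarrow> 'a" and U :: "nat \<Rightarrow> 'a set"
  assumes bij_T: "bij T"
    and measurable_T: "T \<in> borel_measurable borel"
    and measurable_inv_T: "inv T \<in> borel_measurable borel"
    and aperiodic_T: "\<And>x n. n > 0 \<Longrightarrow> (T ^^ n) x \<noteq> x"
    and sets_U: "\<And>k. U k \<in> sets borel"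
    and U_separates: "\<And>x y. x \<noteq> y \<Longrightarrow> \<exists>k. x \<in> U k \<and> y \<notin> U k"
begin

definition Tpow :: "int \<Rightarrow> 'a \<Rightarrow> 'a" where
  "Tpow j = (if 0 \<le> j then T ^^ nat j else inv T ^^ nat (- j))"

lemma T_inv_T: "T (inv T x) = x" using bij_T by (simp add: bij_def surj_f_inv_f)

lemma inv_T_T: "inv T (T x) = x" using bij_T by (simp add: bij_def inv_f_f)

lemma Tpow_0[simp]: "Tpow 0 x = x" by (simp add: Tpow_def)

lemma Tpow_plus_1: "Tpow (j + 1) x = T (Tpow j x)"
proof (cases "0 \<le> j")
  case True
  then have "nat (j+1) = Suc (nat j)" by simp
  then show ?thesis using True by (simp add: Tpow_def)
next
  case False
  show ?thesis
  proof (cases "j = -1")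
    case True then show ?thesis by (simp add: Tpow_def T_inv_T)
  next
    case False2: False
    with False have "nat (-j) = Suc (nat (- (j+1)))" "\<not> 0 \<le> j+1" by auto
    then show ?thesis using False by (simp add: Tpow_def T_inv_T)
  qed
qed

lemma Tpow_minus_1: "Tpow (j - 1) x = inv T (Tpow j x)"
  using Tpow_plus_1[of "j - 1" x] by (simp add: inv_T_T)

lemma Tpow_add: "Tpow i (Tpow j x) = Tpow (i + j) x"
proof (induction i rule: int_induct[where k=0])
  case base then show ?case by simp
next
  case (step1 i) then show ?case using Tpow_plus_1
    by (metis add.commute add.left_commute)
next
  case (step2 i)
  then show ?case using Tpow_minus_1 by (metis add.commute diff_add_eq)
qed

lemma Tpow_add_eq: "i + j = k \<Longrightarrow> Tpow i (Tpow j x) = Tpow k x"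
  by (simp add: Tpow_add)

lemma Tpow_of_nat: "Tpow (int n) = T ^^ n" by (simp add: Tpow_def)

lemma Tpow_1: "Tpow 1 = T" using Tpow_of_nat[of 1] by simp

lemma Tpow_inj: assumes "Tpow i x = Tpow j x" shows "i = j"
proof -
  have "Tpow i x \<noteq> Tpow j x" if "i < j" for i j
  proof
    assume "Tpow i x = Tpow j x"
    then have "(T ^^ nat (j - i)) (Tpow i x) = Tpow i x"
      using Tpow_add[of "j - i" i x] that by (simp add: Tpow_def)
    then show False using aperiodic_T[of "nat (j - i)"] that by simp
  qed
  then show ?thesis using assms by (metis linorder_neqE)
qed

lemma measurable_Tpow[measurable]: "Tpow j \<in> borel_measurable borel"
  unfolding Tpow_def using measurable_funpow[OF measurable_T] measurable_funpow[OF measurable_inv_T]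
  by auto

lemma sets_vimage_Tpow[measurable]: "W \<in> sets borel \<Longrightarrow> Tpow j -` W \<in> sets borel"
  using measurable_sets[OF measurable_Tpow, of W j] by simp

lemma space_M_ap: "M \<in> M_ap T \<Longrightarrow> space M = UNIV"
  unfolding M_ap_def using sets_eq_imp_space_eq[of M borel] by auto

lemma sets_M_ap: "M \<in> M_ap T \<Longrightarrow> sets M = sets borel"
  unfolding M_ap_def by auto

lemma prob_space_M_ap: "M \<in> M_ap T \<Longrightarrow> prob_space M"
  unfolding M_ap_def by auto

lemma M_ap_funpow_invariant: assumes "M \<in> M_ap T" "W \<in> sets borel"
  shows "emeasure M ((T ^^ n) -` W) = emeasure M W"
  using assms(2)
proof (induction n arbitrary: W)
  case 0 then show ?case by simp
next
  case (Suc n)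
  have "(T ^^ Suc n) -` W = (T ^^ n) -` (T -` W)" by auto
  moreover have "T -` W \<in> sets borel" using measurable_sets[OF measurable_T Suc.prems] by simp
  ultimately have "emeasure M ((T ^^ Suc n) -` W) = emeasure M (T -` W)" using Suc.IH by simp
  also have "\<dots> = emeasure M W" using assms(1) Suc.prems unfolding M_ap_def by auto
  finally show ?case .
qed

lemma M_ap_Tpow_invariant: assumes "M \<in> M_ap T" "W \<in> sets borel"
  shows "emeasure M (Tpow j -` W) = emeasure M W"
proof (cases "0 \<le> j")
  case True
  then have "Tpow j = T ^^ nat j" by (simp add: Tpow_def)
  then show ?thesis using M_ap_funpow_invariant[OF assms] by simp
next
  case False
  define V where "V = Tpow j -` W"
  have V: "V \<in> sets borel" unfolding V_def using assms(2) by measurable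
  have "Tpow (-j) -` V = W" unfolding V_def by (auto simp: Tpow_add)
  moreover have "Tpow (-j) = T ^^ nat (-j)" using False by (simp add: Tpow_def)
  ultimately have "emeasure M W = emeasure M V"
    using M_ap_funpow_invariant[OF assms(1) V, of "nat (-j)"] by metis
  then show ?thesis unfolding V_def by simp
qed

lemma M_ap_wandering_null:
  assumes M: "M \<in> M_ap T" and W: "W \<in> sets borel"
    and once: "\<And>x n. x \<in> W \<Longrightarrow> 0 < n \<Longrightarrow> Tpow (int n) x \<notin> W"
  shows "emeasure M W = 0"
proof -
  interpret prob_space M using prob_space_M_ap[OF M] .
  define D where "D n = Tpow (int n) -` W" for n
  have disj_pairs: "D m \<inter> D n = {}" if "m < n" for m n
  proof -
    have "Tpow (int n) x = Tpow (int (n - m)) (Tpow (int m) x)" for x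
      using that by (simp add: Tpow_add)
    then show ?thesis using once[of _ "n - m"] that unfolding D_def by auto
  qed
  have "D n \<in> events" for n
    unfolding D_def sets_M_ap[OF M] using W by measurable
  moreover from disj_pairs have "disjoint_family D"
    unfolding disjoint_family_on_def by (metis Int_commute linorder_neqE_nat)
  moreover have "prob (D n) = prob W" for n
    using M_ap_Tpow_invariant[OF M W, of "int n"] unfolding D_def measure_def by simp
  ultimately have "prob W = 0" by (rule prob_eq_0_if_disjoint_copies)
  then show ?thesis using emeasure_eq_measure by simp
qed

section \<open>Markers\<close>

text \<open>\<open>sep_index\<close> takes every value infinitely often.\<close>

definition sep_index :: "nat \<Rightarrow> nat" where "sep_index g = fst (prod_decode g)"

definition drop_set :: "nat \<Rightarrow> 'a set \<Rightarrow> 'a set" where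
  "drop_set g W = {c \<in> W. c \<notin> U (sep_index g) \<and>
     (\<exists>i::nat. 0 < i \<and> Tpow (- int i) c \<in> W \<and> Tpow (- int i) c \<in> U (sep_index g)
        \<and> (\<forall>i'. 0 < i' \<and> i' < i \<longrightarrow> Tpow (- int i') c \<notin> W))}"

fun marker :: "nat \<Rightarrow> 'a set" where
  "marker 0 = UNIV"
| "marker (Suc g) = marker g - drop_set g (marker g)"

definition dropped :: "nat \<Rightarrow> 'a set" where "dropped g = drop_set g (marker g)"

declare marker.simps(2)[simp del]

lemma marker_Suc[simp]: "marker (Suc g) = marker g - dropped g"
  by (simp add: dropped_def marker.simps)

lemma dropped_subset: "dropped g \<subseteq> marker g" by (auto simp: dropped_def drop_set_def)

lemma marker_Suc_subset: "marker (Suc g) \<subseteq> marker g" by auto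

lemma marker_antimono: "g \<le> h \<Longrightarrow> marker h \<subseteq> marker g"
  by (induction h rule: dec_induct) (use marker_Suc_subset in auto)

lemma droppedD: assumes "c \<in> dropped g"
  shows "c \<in> marker g" "c \<notin> U (sep_index g)"
    "\<exists>i. 0 < i \<and> Tpow (- int i) c \<in> marker g \<and> Tpow (- int i) c \<in> U (sep_index g)
       \<and> (\<forall>i'. 0 < i' \<and> i' < i \<longrightarrow> Tpow (- int i') c \<notin> marker g)"
  using assms unfolding dropped_def drop_set_def by auto

lemma dropped_next_marker_kept:
  assumes c: "c \<in> dropped g" and d: "0 < d" "Tpow (int d) c \<in> marker g"
    and gap: "\<forall>d'. 0 < d' \<and> d' < d \<longrightarrow> Tpow (int d') c \<notin> marker g"
  shows "Tpow (int d) c \<notin> dropped g"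
proof
  assume "Tpow (int d) c \<in> dropped g"
  from droppedD(3)[OF this] obtain i where i: "0 < i" "Tpow (- int i) (Tpow (int d) c) \<in> marker g"
    "Tpow (- int i) (Tpow (int d) c) \<in> U (sep_index g)"
    "\<forall>i'. 0 < i' \<and> i' < i \<longrightarrow> Tpow (- int i') (Tpow (int d) c) \<notin> marker g" by blast
  have cA: "c \<in> marker g" using droppedD(1)[OF c] .
  have "Tpow (- int d) (Tpow (int d) c) = c" by (simp add: Tpow_add)
  then have "\<not> d < i" using i(4) cA d(1) by (metis (no_types, lifting))
  moreover have "\<not> i < d"
  proof
    assume "i < d"
    have "Tpow (- int i) (Tpow (int d) c) = Tpow (int (d - i)) c" using \<open>i < d\<close>
      by (simp add: Tpow_add)
    moreover have "0 < d - i" "d - i < d" using \<open>i < d\<close> i(1) by auto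
    ultimately show False using gap i(2) by metis
  qed
  ultimately have "i = d" by simp
  then show False using i(3) droppedD(2)[OF c] by (simp add: Tpow_add)
qed

text \<open>Since two consecutive markers are never both dropped, every step at most doubles the gaps
  between consecutive markers.\<close>

lemma marker_gap_le:
  assumes "a \<in> marker g" "0 < d" "Tpow (int d) a \<in> marker g"
    "\<forall>d'. 0 < d' \<and> d' < d \<longrightarrow> Tpow (int d') a \<notin> marker g"
  shows "d \<le> 2 ^ g"
  using assms
proof (induction g arbitrary: a d)
  case 0
  have "\<not> 1 < d" using 0(4) by auto
  then show ?case using 0(2) by simp
next
  case (Suc g)
  have aA: "a \<in> marker g" "Tpow (int d) a \<in> marker g" using Suc.prems marker_Suc_subset by auto
  have "\<exists>i. 0 < i \<and> Tpow (int i) a \<in> marker g" using aA Suc.prems(2) by auto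
  from ex_least_pos[OF this] obtain d1 where d1: "0 < d1" "Tpow (int d1) a \<in> marker g"
    "\<forall>d'. 0 < d' \<and> d' < d1 \<longrightarrow> Tpow (int d') a \<notin> marker g" by blast
  have "d1 \<le> d" using d1(3) aA Suc.prems(2) by (meson not_le)
  have h1: "d1 \<le> 2 ^ g" using Suc.IH[OF aA(1) d1] .
  show ?case
  proof (cases "d1 = d")
    case True then show ?thesis using h1 by simp
  next
    case False
    then have "d1 < d" using \<open>d1 \<le> d\<close> by simp
    have c1Q: "Tpow (int d1) a \<in> dropped g"
      using Suc.prems(4) \<open>d1 < d\<close> d1(1,2) by auto
    define c1 where "c1 = Tpow (int d1) a"
    have "Tpow (int (d - d1)) c1 = Tpow (int d) a" unfolding c1_def using \<open>d1 < d\<close>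
      by (simp add: Tpow_add)
    then have "\<exists>i. 0 < i \<and> Tpow (int i) c1 \<in> marker g"
      using aA \<open>d1 < d\<close> by (metis zero_less_diff)
    from ex_least_pos[OF this] obtain d2 where d2: "0 < d2" "Tpow (int d2) c1 \<in> marker g"
      "\<forall>d'. 0 < d' \<and> d' < d2 \<longrightarrow> Tpow (int d') c1 \<notin> marker g" by blast
    have h2: "d2 \<le> 2 ^ g" using Suc.IH[OF _ d2] c1Q dropped_subset unfolding c1_def by auto
    have c2: "Tpow (int d2) c1 = Tpow (int (d1 + d2)) a" unfolding c1_def
      by (simp add: Tpow_add add.commute)
    have nq: "Tpow (int d2) c1 \<notin> dropped g"
      using dropped_next_marker_kept[OF c1Q[folded c1_def] d2] .
    then have inS: "Tpow (int (d1 + d2)) a \<in> marker (Suc g)" using d2(2) c2 by simp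
    have "\<not> d1 + d2 < d" using Suc.prems(4) inS d1(1) by auto
    moreover have "\<not> d < d1 + d2"
    proof
      assume "d < d1 + d2"
      then have "0 < d - d1" "d - d1 < d2" using \<open>d1 < d\<close> by auto
      moreover have "Tpow (int (d - d1)) c1 = Tpow (int d) a" unfolding c1_def
        using \<open>d1 < d\<close> by (simp add: Tpow_add)
      ultimately show False using d2(3) aA by metis
    qed
    ultimately have "d = d1 + d2" by simp
    then show ?thesis using h1 h2 by simp
  qed
qed

lemma drop_set_measurable: assumes "W \<in> sets borel" shows "drop_set g W \<in> sets borel"
proof -
  have "drop_set g W = W \<inter> - U (sep_index g) \<inter>
      (\<Union>i\<in>{0<..}. Tpow (- int i) -` (W \<inter> U (sep_index g)) \<inter> (\<Inter>i'\<in>{0<..<i}. Tpow (- int i') -` (- W)))"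
    unfolding drop_set_def by auto
  also have "\<dots> \<in> sets borel" using assms sets_U by measurable
  finally show ?thesis .
qed

lemma marker_measurable[measurable]: "marker g \<in> sets borel"
  by (induction g) (auto simp: dropped_def intro: drop_set_measurable)

lemma dropped_measurable[measurable]: "dropped g \<in> sets borel"
  unfolding dropped_def by (rule drop_set_measurable) simp

section \<open>The universal set\<close>

definition marker_limit :: "'a set" where "marker_limit = (\<Inter>g. marker g)"

definition marker_last :: "nat \<Rightarrow> 'a set" where
  "marker_last g = {x \<in> marker g. \<forall>i::nat. 0 < i \<longrightarrow> Tpow (int i) x \<notin> marker g}"

definition Xh :: "'a set" where
  "Xh = {x. \<forall>j. Tpow j x \<notin> marker_limit \<and> (\<forall>g. Tpow j x \<notin> marker_last g)}"

lemma marker_limit_measurable[measurable]: "marker_limit \<in> sets borel"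
  unfolding marker_limit_def by measurable

lemma marker_last_measurable[measurable]: "marker_last g \<in> sets borel"
proof -
  have "marker_last g = marker g \<inter> (\<Inter>i\<in>{0<..}. Tpow (int i) -` (UNIV - marker g))"
    unfolding marker_last_def by auto
  also have "\<dots> \<in> sets borel" by measurable
  finally show ?thesis .
qed

lemma Xh_measurable[measurable]: "Xh \<in> sets borel"
proof -
  have "Xh = (\<Inter>j. UNIV - Tpow j -` marker_limit - (\<Union>g. Tpow j -` marker_last g))"
    unfolding Xh_def by auto
  also have "\<dots> \<in> sets borel" by measurable
  finally show ?thesis .
qed

lemma Tpow_in_Xh: "x \<in> Xh \<Longrightarrow> Tpow m x \<in> Xh"
  unfolding Xh_def by (auto simp: Tpow_add)

lemma T_in_Xh: "x \<in> Xh \<Longrightarrow> T x \<in> Xh" using Tpow_in_Xh[of x 1]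
  by (simp add: Tpow_1)

lemma Xh_not_marker_limit: assumes "x \<in> Xh" shows "x \<notin> marker_limit"
  using assms[unfolded Xh_def, simplified, THEN spec[of _ 0]] by simp

lemma Xh_not_marker_last: assumes "x \<in> Xh" shows "x \<notin> marker_last g"
  using assms[unfolded Xh_def, simplified, THEN spec[of _ 0]] by simp

lemma Xh_future_marker: "x \<in> Xh \<Longrightarrow> \<exists>i. 0 < i \<and> Tpow (int i) x \<in> marker g"
proof (induction g arbitrary: x)
  case 0 then show ?case by (intro exI[of _ 1]) simp
next
  case (Suc g)
  from Suc.IH[OF Suc.prems] obtain i where i: "0 < i" "Tpow (int i) x \<in> marker g" by blast
  define y where "y = Tpow (int i) x"
  show ?case
  proof (cases "y \<in> dropped g")
    case False then show ?thesis using i y_def by auto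
  next
    case True
    have "y \<in> Xh" unfolding y_def using Suc.prems by (rule Tpow_in_Xh)
    then have "y \<notin> marker_last g" by (rule Xh_not_marker_last)
    then have "\<exists>j. 0 < j \<and> Tpow (int j) y \<in> marker g" using i(2)
      unfolding marker_last_def y_def by auto
    from ex_least_pos[OF this] obtain d where d: "0 < d" "Tpow (int d) y \<in> marker g"
      "\<forall>d'. 0 < d' \<and> d' < d \<longrightarrow> Tpow (int d') y \<notin> marker g" by blast
    have "Tpow (int d) y \<notin> dropped g" using dropped_next_marker_kept[OF True d] .
    then have "Tpow (int (d + i)) x \<in> marker (Suc g)" using d(2) unfolding y_def
      by (simp add: Tpow_add)
    then show ?thesis using d(1) by (intro exI[of _ "d + i"]) simp
  qed
qed

lemma marker_limitI:
  assumes "a \<in> marker g" "\<forall>i. 0 < i \<longrightarrow> Tpow (- int i) a \<notin> marker g"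
  shows "a \<in> marker_limit"
proof -
  have "a \<in> marker h" for h
  proof (cases "h \<le> g")
    case True then show ?thesis using marker_antimono assms(1) by blast
  next
    case False
    then have "g \<le> h" by simp
    then show ?thesis
    proof (induction h rule: dec_induct)
      case base then show ?case using assms(1) .
    next
      case (step h)
      have "a \<notin> dropped h"
      proof
        assume "a \<in> dropped h"
        from droppedD(3)[OF this] obtain i where "0 < i" "Tpow (- int i) a \<in> marker h" by blast
        then show False using assms(2) marker_antimono[OF step(1)] by blast
      qed
      then show ?case using step by simp
    qed
  qed
  then show ?thesis unfolding marker_limit_def by auto
qed

text \<open>A first marker on an orbit would never be dropped.\<close>

lemma Xh_past_marker: assumes x: "x \<in> Xh"
  shows "\<exists>i. 0 < i \<and> Tpow (- int i) x \<in> marker g"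
proof (rule ccontr)
  assume no: "\<not> (\<exists>i. 0 < i \<and> Tpow (- int i) x \<in> marker g)"
  have "Tpow (-1) x \<in> Xh" using x by (rule Tpow_in_Xh)
  from Xh_future_marker[OF this] obtain i where i: "0 < i" "Tpow (int i) (Tpow (-1) x) \<in> marker g"
  by blast
  then have "Tpow (int i) (Tpow (-1) x) = Tpow (int (i - 1)) x" by (simp add: Tpow_add of_nat_diff)
  then have "\<exists>m. Tpow (int m) x \<in> marker g" using i(2) by metis
  from ex_least[OF this] obtain m where m: "Tpow (int m) x \<in> marker g"
    "\<forall>m'<m. Tpow (int m') x \<notin> marker g" by blast
  have "\<forall>i. 0 < i \<longrightarrow> Tpow (- int i) (Tpow (int m) x) \<notin> marker g"
  proof (intro allI impI)
    fix i :: nat assume "0 < i"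
    show "Tpow (- int i) (Tpow (int m) x) \<notin> marker g"
    proof (cases "i \<le> m")
      case True
      then have "Tpow (- int i) (Tpow (int m) x) = Tpow (int (m - i)) x" by (simp add: Tpow_add)
      moreover have "m - i < m" using \<open>0 < i\<close> True by simp
      ultimately show ?thesis using m(2) by simp
    next
      case False
      then have "Tpow (- int i) (Tpow (int m) x) = Tpow (- int (i - m)) x" by (simp add: Tpow_add)
      then show ?thesis using no False by (metis zero_less_diff not_le)
    qed
  qed
  then have "Tpow (int m) x \<in> marker_limit" using marker_limitI m(1) by blast
  moreover have "Tpow (int m) x \<in> Xh" using x by (rule Tpow_in_Xh)
  ultimately show False using Xh_not_marker_limit by blast
qed

lemma Xh_leaves_marker: "x \<in> Xh \<Longrightarrow> \<exists>g. x \<notin> marker g"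
  using Xh_not_marker_limit unfolding marker_limit_def by auto

lemma Xh_marker_near: assumes x: "x \<in> Xh"
  shows "\<exists>d. 0 < d \<and> d \<le> 2 ^ g \<and> Tpow (int d) x \<in> marker g"
proof -
  have "\<exists>e. Tpow (- int e) x \<in> marker g" using Xh_past_marker[OF x, of g] by blast
  from ex_least[OF this] obtain e where e: "Tpow (- int e) x \<in> marker g"
    "\<forall>e'<e. Tpow (- int e') x \<notin> marker g" by blast
  define a where "a = Tpow (- int e) x"
  have aX: "a \<in> Xh" unfolding a_def using Tpow_in_Xh[OF x] .
  obtain d0 where d0: "0 < d0" "Tpow (int d0) a \<in> marker g"
    "\<forall>d'. 0 < d' \<and> d' < d0 \<longrightarrow> Tpow (int d') a \<notin> marker g"
    using ex_least_pos[OF Xh_future_marker[OF aX, of g]] by blast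
  have b: "d0 \<le> 2 ^ g" using marker_gap_le[OF e(1)[folded a_def] d0] .
  have "e < d0"
  proof (rule ccontr)
    assume "\<not> e < d0"
    then have "Tpow (int d0) a = Tpow (- int (e - d0)) x" unfolding a_def
      by (intro Tpow_add_eq) (simp add: of_nat_diff)
    moreover have "e - d0 < e" using d0(1) \<open>\<not> e < d0\<close> by simp
    ultimately show False using e(2) d0(2) by metis
  qed
  have "Tpow (int (d0 - e)) x = Tpow (int d0) a" unfolding a_def using \<open>e < d0\<close>
    by (intro Tpow_add_eq[symmetric]) (simp add: of_nat_diff)
  then show ?thesis using d0(2) b \<open>e < d0\<close> by (intro exI[of _ "d0 - e"]) auto
qed

lemma marker_eventually_dropped: assumes b: "b \<in> Xh" "b \<in> marker g"
  shows "\<exists>g'\<ge>g. b \<in> dropped g'"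
proof -
  have "\<exists>h. b \<notin> marker h" using Xh_leaves_marker[OF b(1)] .
  from ex_least[OF this] obtain h where h: "b \<notin> marker h" "\<forall>h'<h. b \<in> marker h'" by blast
  have "h \<noteq> 0" using h(1) by (cases h) auto
  then obtain g' where g': "h = Suc g'" by (cases h) auto
  have "b \<in> marker g'" using h(2) g' by simp
  moreover have "b \<notin> marker (Suc g')" using h(1) g' by simp
  ultimately have bQ: "b \<in> dropped g'" by simp
  have "g \<le> g'"
  proof (rule ccontr)
    assume "\<not> g \<le> g'"
    then have "Suc g' \<le> g" by simp
    then show False using marker_antimono b(2) h(1) g' by blast
  qed
  then show ?thesis using bQ by blast
qed

lemma marker_last_once: "x \<in> marker_last g \<Longrightarrow> 0 < m \<Longrightarrow> Tpow (int m) x \<notin> marker_last g"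
  unfolding marker_last_def by auto

lemma marker_eventually_avoids:
  assumes "finite P" "P \<inter> marker_limit = {}" shows "\<exists>G. P \<inter> marker G = {}"
  using assms
proof (induction P rule: finite_induct)
  case (insert p P)
  then obtain G h where "P \<inter> marker G = {}" "p \<notin> marker h"
    unfolding marker_limit_def by blast
  then have "insert p P \<inter> marker (max G h) = {}"
    using marker_antimono[of G "max G h"] marker_antimono[of h "max G h"] by auto
  then show ?case ..
qed simp

text \<open>If \<open>x\<close> and a later point \<open>c\<close> of its orbit stayed markers forever, with no such point
  in between, choose \<open>g\<close> so late that no point strictly between them is a marker of step \<open>g\<close>
  and with \<open>sep_index g\<close> separating \<open>x\<close> from \<open>c\<close>: then \<open>c\<close> is dropped at step \<open>g\<close>.\<close>

lemma marker_limit_once: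
  assumes x: "x \<in> marker_limit" and m: "0 < m" shows "Tpow (int m) x \<notin> marker_limit"
proof
  assume "Tpow (int m) x \<in> marker_limit"
  then obtain d where d: "0 < d" "Tpow (int d) x \<in> marker_limit"
    and between: "\<forall>d'. 0 < d' \<and> d' < d \<longrightarrow> Tpow (int d') x \<notin> marker_limit"
    using ex_least_pos[of "\<lambda>i. Tpow (int i) x \<in> marker_limit"] m by blast
  obtain G where G: "(\<lambda>i. Tpow (int i) x) ` {0<..<d} \<inter> marker G = {}"
    using marker_eventually_avoids[of "(\<lambda>i. Tpow (int i) x) ` {0<..<d}"] between
      by fastforce
  have "x \<noteq> Tpow (int d) x" using Tpow_inj[of 0 x "int d"] d(1) by auto
  then obtain k where k: "x \<in> U k" "Tpow (int d) x \<notin> U k" using U_separates by blast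
  define g where "g = prod_encode (k, G)"
  have "sep_index g = k" unfolding g_def sep_index_def by simp
  define c where "c = Tpow (int d) x"
  have "Tpow (- int i) c \<notin> marker g" if "0 < i" "i < d" for i
  proof -
    have "Tpow (- int i) c = Tpow (int (d - i)) x" unfolding c_def using that
      by (simp add: Tpow_add)
    moreover have "G \<le> g" unfolding g_def by (rule le_prod_encode_2)
    ultimately show ?thesis using G that marker_antimono[of G g] by fastforce
  qed
  moreover have "Tpow (- int d) c = x" unfolding c_def by (simp add: Tpow_add)
  ultimately have "c \<in> dropped g"
    using x d k \<open>sep_index g = k\<close>
      unfolding dropped_def drop_set_def c_def marker_limit_def by auto
  moreover have "c \<in> marker (Suc g)" using d(2) unfolding c_def marker_limit_def by blast
  ultimately show False by simp
qed

lemma metrically_universal_Xh: "metrically_universal T Xh"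
  unfolding metrically_universal_def
proof (intro conjI ballI)
  show "Xh \<in> sets borel" by measurable
  fix M assume M: "M \<in> M_ap T"
  interpret prob_space M using prob_space_M_ap[OF M] .
  have null: "Tpow j -` W \<in> null_sets M"
    if W: "W \<in> sets borel" and once: "\<And>x n. x \<in> W \<Longrightarrow> 0 < n \<Longrightarrow> Tpow (int n) x \<notin> W"
      for W j
    using M_ap_Tpow_invariant[OF M W, of j] M_ap_wandering_null[OF M W once] W
    by (simp add: null_sets_def sets_M_ap[OF M])
  have "space M - Xh = (\<Union>j. Tpow j -` marker_limit) \<union> (\<Union>j. \<Union>g. Tpow j -` marker_last g)"
    unfolding Xh_def space_M_ap[OF M] by auto
  also have "\<dots> \<in> null_sets M"
    using null marker_limit_once marker_last_once by (intro null_sets.Un null_sets_UN') auto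
  finally have "prob (space M - Xh) = 0" by (simp add: null_sets_def measure_def)
  moreover have "Xh \<in> events" using sets_M_ap[OF M] by simp
  ultimately have "prob Xh = 1" using prob_compl[of Xh] by simp
  then show "emeasure M Xh = 1" using emeasure_eq_measure[of Xh] by simp
qed

section \<open>Stages and blocks\<close>

text \<open>Step \<open>g\<close> is split into \<open>num_patterns g\<close> stages, each removing the markers dropped at step
  \<open>g\<close> that have one given pattern, i.e.\ one set of \<open>(k, j)\<close> with \<open>k \<le> g\<close>, \<open>\<bar>j\<bar> \<le> 2^g\<close> and
  \<open>T\<^sup>j c \<in> U k\<close>. The stage at which a point is removed thus records its pattern.\<close>

definition window :: "nat \<Rightarrow> (nat \<times> int) set" where
  "window g = {..g} \<times> {- (2 ^ g) .. 2 ^ g}"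

definition window_code :: "nat \<times> int \<Rightarrow> nat" where
  "window_code p = prod_encode (fst p, int_encode (snd p))"

lemma window_code_inj: "window_code p = window_code q \<Longrightarrow> p = q"
  unfolding window_code_def by (cases p; cases q) (auto simp: int_encode_eq)

lemma inj_window_code: "inj window_code" using window_code_inj by (auto intro: injI)

lemma finite_window: "finite (window g)" unfolding window_def by auto

definition pattern_set :: "nat \<Rightarrow> 'a \<Rightarrow> nat set" where
  "pattern_set g c = window_code ` {p \<in> window g. Tpow (snd p) c \<in> U (fst p)}"

definition pattern :: "nat \<Rightarrow> 'a \<Rightarrow> nat" where "pattern g c = set_encode (pattern_set g c)"

definition num_patterns :: "nat \<Rightarrow> nat" where
  "num_patterns g = 2 ^ Suc (Max (window_code ` window g))"

lemma num_patterns_pos: "0 < num_patterns g" by (simp add: num_patterns_def)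

lemma finite_pattern_set: "finite (pattern_set g c)" unfolding pattern_set_def using finite_window
by auto

lemma pattern_less: "pattern g c < num_patterns g"
proof -
  have "pattern_set g c \<subseteq> {..<Suc (Max (window_code ` window g))}"
  proof
    fix z assume "z \<in> pattern_set g c"
    then obtain p where "p \<in> window g" "z = window_code p" unfolding pattern_set_def by auto
    then have "z \<le> Max (window_code ` window g)" using finite_window by auto
    then show "z \<in> {..<Suc (Max (window_code ` window g))}" by auto
  qed
  then show ?thesis unfolding pattern_def num_patterns_def by (rule set_encode_less_power)
qed

lemma pattern_eq_imp_same_visits: assumes "pattern g c = pattern g c'" "p \<in> window g"
  shows "(Tpow (snd p) c \<in> U (fst p)) = (Tpow (snd p) c' \<in> U (fst p))"
proof -
  have "pattern_set g c = pattern_set g c'" using assms(1) finite_pattern_set unfolding pattern_def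
    by (simp add: set_encode_eq)
  then have "(window_code p \<in> pattern_set g c) = (window_code p \<in> pattern_set g c')" by simp
  moreover have "(window_code p \<in> pattern_set g d) = (Tpow (snd p) d \<in> U (fst p))" for d
    unfolding pattern_set_def using assms(2) inj_image_mem_iff[OF inj_window_code] by simp
  ultimately show ?thesis by simp
qed

lemma measurable_pattern[measurable]: "pattern g \<in> borel \<rightarrow>\<^sub>M count_space UNIV"
proof -
  have "(\<lambda>c. {p \<in> window g. Tpow (snd p) c \<in> U (fst p)}) \<in> borel \<rightarrow>\<^sub>M count_space (Pow (window g))"
    by (rule measurable_filter_finite[OF finite_window]) (use sets_U in measurable)
  then have "(\<lambda>c. set_encode (window_code ` {p \<in> window g. Tpow (snd p) c \<in> U (fst p)}))
      \<in> borel \<rightarrow>\<^sub>M count_space UNIV"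
    by (rule measurable_compose) simp
  then show ?thesis unfolding pattern_def[abs_def] pattern_set_def .
qed

fun stage :: "nat \<Rightarrow> nat \<times> nat" where
  "stage 0 = (0, 0)"
| "stage (Suc n) =
     (let (g, t) = stage n in if Suc t < num_patterns g then (g, Suc t) else (Suc g, 0))"

definition base :: "nat \<Rightarrow> 'a set" where
  "base n = (case stage n of (g, t) \<Rightarrow> marker g - {c \<in> dropped g. pattern g c < t})"

definition joined :: "nat \<Rightarrow> 'a set" where "joined n = base n - base (Suc n)"

lemma base_0: "base 0 = UNIV" by (simp add: base_def)

lemma base_eq:
  "stage n = (g, t) \<Longrightarrow> base n = marker g - {c \<in> dropped g. pattern g c < t}"
  by (simp add: base_def)

lemma base_Suc_eq: assumes "stage n = (g, t)"
  shows "base (Suc n) = marker g - {c \<in> dropped g. pattern g c \<le> t}"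
proof (cases "Suc t < num_patterns g")
  case True
  then have "stage (Suc n) = (g, Suc t)" using assms by simp
  then show ?thesis by (simp add: base_def less_Suc_eq_le)
next
  case False
  then have "stage (Suc n) = (Suc g, 0)" using assms by simp
  then have "base (Suc n) = marker g - dropped g" by (simp add: base_def marker_Suc)
  moreover have "{c \<in> dropped g. pattern g c \<le> t} = dropped g"
    using pattern_less[of g] False
  proof -
    have "pattern g c \<le> t" if "c \<in> dropped g" for c using pattern_less[of g c] False
      by linarith
    then show ?thesis by auto
  qed
  ultimately show ?thesis by simp
qed

lemma joined_eq: assumes "stage n = (g, t)" shows "joined n = {c \<in> dropped g. pattern g c = t}"
  unfolding joined_def base_Suc_eq[OF assms] base_eq[OF assms] using dropped_subset by auto

lemma base_subset_marker: "stage n = (g, t) \<Longrightarrow> base n \<subseteq> marker g"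
  by (auto simp: base_eq)

lemma marker_Suc_subset_base: "stage n = (g, t) \<Longrightarrow> marker (Suc g) \<subseteq> base n"
  by (auto simp: base_eq marker_Suc)

lemma base_Suc_subset: "base (Suc n) \<subseteq> base n"
proof -
  obtain g t where "stage n = (g, t)" by fastforce
  then show ?thesis using base_Suc_eq base_eq by auto
qed

lemma base_antimono: "n \<le> m \<Longrightarrow> base m \<subseteq> base n"
  by (induction m rule: dec_induct) (use base_Suc_subset in auto)

lemma stage_exists: assumes "t < num_patterns g" shows "\<exists>n. stage n = (g, t)"
proof -
  have "\<exists>n. stage n = (g, 0)"
  proof (induction g)
    case 0 show ?case using stage.simps(1) by blast
  next
    case (Suc g)
    then obtain n where n: "stage n = (g, 0)" by blast
    have "stage (n + t) = (g, t)" if "t < num_patterns g" for t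
      using that by (induction t) (auto simp: n)
    moreover obtain m where m: "num_patterns g = Suc m"
      using num_patterns_pos[of g] not0_implies_Suc by blast
    ultimately have "stage (n + m) = (g, m)" by simp
    then have "stage (Suc (n + m)) = (Suc g, 0)" using m by simp
    then show ?case by blast
  qed
  then obtain n where n: "stage n = (g, 0)" by blast
  have "stage (n + t) = (g, t)" using assms by (induction t) (auto simp: n)
  then show ?thesis by blast
qed

lemma base_measurable[measurable]: "base n \<in> sets borel"
proof -
  obtain g t where gt: "stage n = (g, t)" by fastforce
  have "base n = marker g - (dropped g \<inter> pattern g -` {..<t})" using base_eq[OF gt] by auto
  also have "\<dots> \<in> sets borel"
  proof -
    have "pattern g -` {..<t} \<in> sets borel"
      using measurable_sets[OF measurable_pattern, of "{..<t}" g] by simp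
    then show ?thesis by auto
  qed
  finally show ?thesis .
qed

lemma joined_measurable[measurable]: "joined n \<in> sets borel" unfolding joined_def by measurable

lemma base_SucI:
  "stage n = (g, t) \<Longrightarrow> x \<in> marker g \<Longrightarrow> x \<notin> dropped g \<Longrightarrow> x \<in> base (Suc n)"
  by (simp add: base_Suc_eq)

lemma joined_subset_dropped: "stage n = (g, t) \<Longrightarrow> joined n \<subseteq> dropped g"
  using joined_eq by auto

lemma joined_next_base_not_joined:
  assumes c: "c \<in> joined n" and d: "0 < d" "Tpow (int d) c \<in> base n"
    and gap: "\<forall>d'. 0 < d' \<and> d' < d \<longrightarrow> Tpow (int d') c \<notin> base n"
  shows "Tpow (int d) c \<notin> joined n"
proof
  assume dS: "Tpow (int d) c \<in> joined n"
  obtain g t where gt: "stage n = (g, t)" by fastforce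
  have cQ: "c \<in> dropped g" using c joined_subset_dropped[OF gt] by auto
  have "\<exists>i. 0 < i \<and> Tpow (int i) c \<in> marker g" using d base_subset_marker[OF gt] by auto
  from ex_least_pos[OF this] obtain d1 where d1: "0 < d1" "Tpow (int d1) c \<in> marker g"
    "\<forall>d'. 0 < d' \<and> d' < d1 \<longrightarrow> Tpow (int d') c \<notin> marker g" by blast
  have "d1 \<le> d" using d1(3) d base_subset_marker[OF gt] by (meson not_le subsetD)
  have nq: "Tpow (int d1) c \<notin> dropped g" using dropped_next_marker_kept[OF cQ d1] .
  show False
  proof (cases "d1 = d")
    case True
    then show False using nq dS joined_subset_dropped[OF gt] by auto
  next
    case False
    then have "d1 < d" using \<open>d1 \<le> d\<close> by simp
    have "Tpow (int d1) c \<in> base (Suc n)" using base_SucI[OF gt d1(2) nq] .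
    then have "Tpow (int d1) c \<in> base n" using base_Suc_subset by auto
    then show False using gap d1(1) \<open>d1 < d\<close> by auto
  qed
qed

lemma joined_prev_base_Suc: assumes c: "c \<in> joined n"
  shows "\<exists>i. 0 < i \<and> Tpow (- int i) c \<in> base (Suc n)
      \<and> (\<forall>i'. 0 < i' \<and> i' < i \<longrightarrow> Tpow (- int i') c \<notin> base n)"
proof -
  obtain g t where gt: "stage n = (g, t)" by fastforce
  have cQ: "c \<in> dropped g" using c joined_subset_dropped[OF gt] by auto
  from droppedD(3)[OF cQ] obtain i where i: "0 < i" "Tpow (- int i) c \<in> marker g"
    "Tpow (- int i) c \<in> U (sep_index g)"
    "\<forall>i'. 0 < i' \<and> i' < i \<longrightarrow> Tpow (- int i') c \<notin> marker g" by blast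
  have "Tpow (- int i) c \<notin> dropped g" using i(3) droppedD(2) by blast
  then have "Tpow (- int i) c \<in> base (Suc n)" using base_SucI[OF gt i(2)] by simp
  moreover have "\<forall>i'. 0 < i' \<and> i' < i \<longrightarrow> Tpow (- int i') c \<notin> base n"
    using i(4) base_subset_marker[OF gt] by auto
  ultimately show ?thesis using i(1) by blast
qed

lemma Xh_future_base: assumes "x \<in> Xh"
  shows "\<exists>i. 0 < i \<and> Tpow (int i) x \<in> base n"
proof -
  obtain g t where gt: "stage n = (g, t)" by fastforce
  from Xh_future_marker[OF assms, of "Suc g"] obtain i where
    "0 < i" "Tpow (int i) x \<in> marker (Suc g)" by blast
  then show ?thesis using marker_Suc_subset_base[OF gt] by (intro exI[of _ i]) auto
qed

lemma Xh_past_base: assumes "x \<in> Xh"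
  shows "\<exists>i. 0 < i \<and> Tpow (- int i) x \<in> base n"
proof -
  obtain g t where gt: "stage n = (g, t)" by fastforce
  from Xh_past_marker[OF assms, of "Suc g"] obtain i where
    "0 < i" "Tpow (- int i) x \<in> marker (Suc g)" by blast
  then show ?thesis using marker_Suc_subset_base[OF gt] by (intro exI[of _ i]) auto
qed

lemma Xh_leaves_base: assumes "x \<in> Xh" shows "\<exists>n\<ge>m. x \<notin> base n"
proof -
  obtain g where g: "x \<notin> marker g" using Xh_leaves_marker[OF assms] by blast
  obtain n where "stage n = (g, 0)" using stage_exists num_patterns_pos by blast
  then have "x \<notin> base n" using g by (simp add: base_eq)
  then show ?thesis using base_antimono[of n "max n m"] by (intro exI[of _ "max n m"]) auto
qed

lemma Xh_avoid_base: assumes x: "x \<in> Xh" and I: "finite I"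
  shows "\<exists>n\<ge>m. \<forall>i\<in>I. Tpow i x \<notin> base n"
  using I
proof (induction I rule: finite_induct)
  case empty then show ?case by auto
next
  case (insert i I)
  then obtain n1 where n1: "n1 \<ge> m" "\<forall>i\<in>I. Tpow i x \<notin> base n1" by blast
  obtain n2 where n2: "n2 \<ge> n1" "Tpow i x \<notin> base n2"
    using Xh_leaves_base[OF Tpow_in_Xh[OF x, of i]] by blast
  have "\<forall>i\<in>I. Tpow i x \<notin> base n2" using n1(2) base_antimono[OF n2(1)] by blast
  then show ?case using n1(1) n2 by (intro exI[of _ n2]) auto
qed

text \<open>The points of \<open>base n\<close> cut every orbit in \<open>Xh\<close> into finite blocks of stage \<open>n\<close>.\<close>

definition ret :: "nat \<Rightarrow> 'a \<Rightarrow> nat" where "ret n w = (LEAST i. 0 < i \<and> Tpow (int i) w \<in> base n)"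

definition offset :: "nat \<Rightarrow> 'a \<Rightarrow> nat" where "offset n w = (LEAST i. Tpow (- int i) w \<in> base n)"

definition block_start :: "nat \<Rightarrow> 'a \<Rightarrow> 'a" where "block_start n w = Tpow (- int (offset n w)) w"

definition next_start :: "nat \<Rightarrow> 'a \<Rightarrow> 'a" where "next_start n w = Tpow (int (ret n w)) w"

lemma ret_eqI:
  assumes "0 < d" "Tpow (int d) w \<in> base n" "\<forall>d'. 0 < d' \<and> d' < d \<longrightarrow> Tpow (int d') w \<notin> base n"
  shows "ret n w = d"
  unfolding ret_def
proof (rule Least_equality)
  show "0 < d \<and> Tpow (int d) w \<in> base n" using assms by simp
  fix y assume "0 < y \<and> Tpow (int y) w \<in> base n"
  then show "d \<le> y" using assms(3) by (meson not_le)
qed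

lemma ret_spec: assumes "w \<in> Xh"
  shows "0 < ret n w" "Tpow (int (ret n w)) w \<in> base n"
    "\<forall>d'. 0 < d' \<and> d' < ret n w \<longrightarrow> Tpow (int d') w \<notin> base n"
proof -
  obtain d where d: "0 < d" "Tpow (int d) w \<in> base n"
    "\<forall>d'. 0 < d' \<and> d' < d \<longrightarrow> Tpow (int d') w \<notin> base n"
    using ex_least_pos[OF Xh_future_base[OF assms]] by blast
  have "ret n w = d" using ret_eqI[OF d] .
  then show "0 < ret n w" "Tpow (int (ret n w)) w \<in> base n"
      "\<forall>d'. 0 < d' \<and> d' < ret n w \<longrightarrow> Tpow (int d') w \<notin> base n"
    using d by auto
qed

lemma offset_eqI: assumes "Tpow (- int k) w \<in> base n" "\<forall>i<k. Tpow (- int i) w \<notin> base n"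
  shows "offset n w = k"
  unfolding offset_def
proof (rule Least_equality)
  show "Tpow (- int k) w \<in> base n" using assms by simp
  fix y assume "Tpow (- int y) w \<in> base n"
  then show "k \<le> y" using assms(2) by (meson not_le)
qed

lemma offset_spec: assumes "w \<in> Xh"
  shows "Tpow (- int (offset n w)) w \<in> base n" "\<forall>i<offset n w. Tpow (- int i) w \<notin> base n"
proof -
  obtain i where "0 < i" "Tpow (- int i) w \<in> base n" using Xh_past_base[OF assms] by blast
  then have "\<exists>k. Tpow (- int k) w \<in> base n" by blast
  from ex_least[OF this] obtain k where k: "Tpow (- int k) w \<in> base n"
    "\<forall>i<k. Tpow (- int i) w \<notin> base n" by blast
  have "offset n w = k" using offset_eqI[OF k] .
  then show "Tpow (- int (offset n w)) w \<in> base n" "\<forall>i<offset n w. Tpow (- int i) w \<notin> base n"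
    using k by auto
qed

lemma block_start_base: "w \<in> Xh \<Longrightarrow> block_start n w \<in> base n"
  unfolding block_start_def using offset_spec by blast

lemma block_start_Xh: "w \<in> Xh \<Longrightarrow> block_start n w \<in> Xh"
  unfolding block_start_def by (rule Tpow_in_Xh)

lemma next_start_base: "w \<in> Xh \<Longrightarrow> next_start n w \<in> base n"
  unfolding next_start_def using ret_spec by blast

lemma next_start_Xh: "w \<in> Xh \<Longrightarrow> next_start n w \<in> Xh" unfolding next_start_def
  by (rule Tpow_in_Xh)

lemma offset_less_ret: assumes w: "w \<in> Xh" shows "offset n w < ret n (block_start n w)"
proof (rule ccontr)
  define r where "r = ret n (block_start n w)"
  assume "\<not> offset n w < ret n (block_start n w)"
  then have le: "r \<le> offset n w" unfolding r_def by simp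
  note h = ret_spec[OF block_start_Xh[OF w, of n], of n, folded r_def]
  have "Tpow (int r) (block_start n w) = Tpow (- int (offset n w - r)) w"
    using le unfolding block_start_def by (intro Tpow_add_eq) (simp add: of_nat_diff)
  moreover have "offset n w - r < offset n w" using h(1) le by simp
  ultimately show False using offset_spec(2)[OF w] h(2) by metis
qed

lemma offset_Suc_not_joined: assumes w: "w \<in> Xh" and ns: "block_start n w \<notin> joined n"
  shows "offset (Suc n) w = offset n w"
proof (rule offset_eqI)
  show "Tpow (- int (offset n w)) w \<in> base (Suc n)" using ns block_start_base[OF w]
    unfolding joined_def block_start_def by auto
  show "\<forall>i<offset n w. Tpow (- int i) w \<notin> base (Suc n)"
    using offset_spec(2)[OF w] base_Suc_subset by blast
qed

lemma offset_Suc_joined: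
  assumes w: "w \<in> Xh" and s: "block_start n w \<in> joined n"
  obtains i where "0 < i" "offset (Suc n) w = offset n w + i" "ret n (block_start (Suc n) w) = i"
    "next_start n (block_start (Suc n) w) = block_start n w" "block_start (Suc n) w \<in> base (Suc n)"
proof -
  define a where "a = block_start n w"
  from joined_prev_base_Suc[OF s[folded a_def]]
    obtain i where i: "0 < i" "Tpow (- int i) a \<in> base (Suc n)"
    "\<forall>i'. 0 < i' \<and> i' < i \<longrightarrow> Tpow (- int i') a \<notin> base n" by blast
  have aL: "a \<notin> base (Suc n)" using s unfolding a_def joined_def by simp
  have eqa: "Tpow (- int i) a = Tpow (- int (offset n w + i)) w" unfolding a_def block_start_def
    by (intro Tpow_add_eq) simp
  have lo1: "offset (Suc n) w = offset n w + i"
  proof (rule offset_eqI)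
    show "Tpow (- int (offset n w + i)) w \<in> base (Suc n)" using i(2) eqa by simp
    show "\<forall>i'<offset n w + i. Tpow (- int i') w \<notin> base (Suc n)"
    proof (intro allI impI)
      fix i' assume i': "i' < offset n w + i"
      consider "i' < offset n w" | "i' = offset n w" | "offset n w < i'" by linarith
      then show "Tpow (- int i') w \<notin> base (Suc n)"
      proof cases
        case 1 then show ?thesis using offset_spec(2)[OF w] base_Suc_subset by blast
      next
        case 2 then show ?thesis using aL unfolding a_def block_start_def by simp
      next
        case 3
        have "Tpow (- int i') w = Tpow (- int (i' - offset n w)) a" unfolding a_def block_start_def
          using 3 by (simp add: Tpow_add)
        moreover have "0 < i' - offset n w" "i' - offset n w < i" using 3 i' by auto
        ultimately show ?thesis using i(3) base_Suc_subset by (metis subsetD)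
      qed
    qed
  qed
  have lep1: "block_start (Suc n) w = Tpow (- int i) a" unfolding block_start_def lo1 eqa ..
  have hi1: "ret n (Tpow (- int i) a) = i"
  proof (rule ret_eqI)
    show "0 < i" by fact
    show "Tpow (int i) (Tpow (- int i) a) \<in> base n" using block_start_base[OF w] unfolding a_def
      by (simp add: Tpow_add)
    show "\<forall>d'. 0 < d' \<and> d' < i \<longrightarrow> Tpow (int d') (Tpow (- int i) a) \<notin> base n"
    proof (intro allI impI)
      fix d' assume d': "0 < d' \<and> d' < i"
      have "Tpow (int d') (Tpow (- int i) a) = Tpow (- int (i - d')) a" using d'
        by (simp add: Tpow_add)
      moreover have "0 < i - d'" "i - d' < i" using d' by auto
      ultimately show "Tpow (int d') (Tpow (- int i) a) \<notin> base n" using i(3) by metis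
    qed
  qed
  have "next_start n (block_start (Suc n) w) = a" unfolding next_start_def lep1 hi1
    by (simp add: Tpow_add)
  then show ?thesis using that i(1,2) lo1 lep1 hi1 unfolding a_def by auto
qed

lemma ret_Suc_joined: assumes a: "a \<in> Xh" "a \<in> base (Suc n)" and c: "next_start n a \<in> joined n"
  shows "ret (Suc n) a = ret n a + ret n (next_start n a)"
proof -
  define c where "c = next_start n a"
  have cX: "c \<in> Xh" unfolding c_def using next_start_Xh[OF a(1)] .
  note hc = ret_spec[OF cX, of n] and ha = ret_spec[OF a(1), of n]
  have "Tpow (int (ret n c)) c \<notin> joined n"
    using joined_next_base_not_joined[OF c[folded c_def] hc] .
  then have c2: "Tpow (int (ret n c)) c \<in> base (Suc n)" using hc(2) unfolding joined_def by simp
  have ceq: "c = Tpow (int (ret n a)) a" unfolding c_def next_start_def ..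
  have cnot: "c \<notin> base (Suc n)" using c unfolding c_def joined_def by simp
  have "ret (Suc n) a = ret n a + ret n c"
  proof (rule ret_eqI)
    show "0 < ret n a + ret n c" using ha by simp
    have "Tpow (int (ret n c)) c = Tpow (int (ret n a + ret n c)) a" unfolding ceq
      by (intro Tpow_add_eq) simp
    then show "Tpow (int (ret n a + ret n c)) a \<in> base (Suc n)" using c2 by simp
    show "\<forall>d'. 0 < d' \<and> d' < ret n a + ret n c \<longrightarrow> Tpow (int d') a \<notin> base (Suc n)"
    proof (intro allI impI)
      fix d' assume d': "0 < d' \<and> d' < ret n a + ret n c"
      consider "d' < ret n a" | "d' = ret n a" | "ret n a < d'" by linarith
      then show "Tpow (int d') a \<notin> base (Suc n)"
      proof cases
        case 1 then show ?thesis using ha(3) d' base_Suc_subset by blast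
      next
        case 2 then show ?thesis using cnot ceq by simp
      next
        case 3
        have "Tpow (int d') a = Tpow (int (d' - ret n a)) c" unfolding ceq using 3
          by (simp add: Tpow_add)
        moreover have "0 < d' - ret n a" "d' - ret n a < ret n c" using 3 d' by auto
        ultimately show ?thesis using hc(3) base_Suc_subset by (metis subsetD)
      qed
    qed
  qed
  then show ?thesis unfolding c_def .
qed

lemma ret_Suc_not_joined: assumes a: "a \<in> Xh" "a \<in> base (Suc n)" and c: "next_start n a \<notin> joined n"
  shows "ret (Suc n) a = ret n a"
proof (rule ret_eqI)
  note ha = ret_spec[OF a(1), of n]
  show "0 < ret n a" by (fact ha(1))
  show "Tpow (int (ret n a)) a \<in> base (Suc n)" using ha(2) c unfolding joined_def next_start_def
  by simp
  show "\<forall>d'. 0 < d' \<and> d' < ret n a \<longrightarrow> Tpow (int d') a \<notin> base (Suc n)"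
    using ha(3) base_Suc_subset by blast
qed

lemma block_start_Suc_not_joined: assumes "w \<in> Xh" "block_start n w \<notin> joined n"
  shows "block_start (Suc n) w = block_start n w"
  unfolding block_start_def using offset_Suc_not_joined[OF assms] by simp

lemma block_start_self: assumes "w \<in> base k" shows "block_start k w = w"
proof -
  have "offset k w = 0" by (rule offset_eqI) (use assms in auto)
  then show ?thesis unfolding block_start_def by simp
qed

lemma last_block: assumes x: "x \<in> Xh" and Tx: "T x \<in> base k"
  shows "ret k (block_start k x) = offset k x + 1" "next_start k (block_start k x) = T x"
proof -
  show h: "ret k (block_start k x) = offset k x + 1"
  proof (rule ret_eqI)
    show "0 < offset k x + 1" by simp
    have "Tpow (int (offset k x + 1)) (block_start k x) = Tpow 1 x" unfolding block_start_def
      by (intro Tpow_add_eq) simp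
    then show "Tpow (int (offset k x + 1)) (block_start k x) \<in> base k" using Tx
      by (simp add: Tpow_1)
    show "\<forall>d'. 0 < d' \<and> d' < offset k x + 1 \<longrightarrow> Tpow (int d') (block_start k x) \<notin> base k"
    proof (intro allI impI)
      fix d' assume d': "0 < d' \<and> d' < offset k x + 1"
      have "Tpow (int d') (block_start k x) = Tpow (- int (offset k x - d')) x"
        unfolding block_start_def using d'
        by (intro Tpow_add_eq) (simp add: of_nat_diff)
      moreover have "offset k x - d' < offset k x" using d' by simp
      ultimately show "Tpow (int d') (block_start k x) \<notin> base k"
        using offset_spec(2)[OF x, of k] by simp
    qed
  qed
  have "Tpow (int (offset k x + 1)) (block_start k x) = Tpow 1 x" unfolding block_start_def
    by (intro Tpow_add_eq) simp
  then show "next_start k (block_start k x) = T x" unfolding next_start_def h by (simp add: Tpow_1)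
qed

lemma block_start_Suc_joined: assumes w: "w \<in> Xh" and s: "block_start k w \<in> joined k"
  shows "block_start (Suc k) w = block_start k (Tpow (-1) (block_start k w))"
proof -
  obtain i where i: "0 < i" "ret k (block_start (Suc k) w) = i"
    "next_start k (block_start (Suc k) w) = block_start k w" "block_start (Suc k) w \<in> base (Suc k)"
    using offset_Suc_joined[OF w s] by metis
  define p where "p = block_start (Suc k) w"
  define a where "a = block_start k w"
  have pX: "p \<in> Xh" unfolding p_def using block_start_Xh[OF w] .
  have hp: "\<forall>d'. 0 < d' \<and> d' < i \<longrightarrow> Tpow (int d') p \<notin> base k"
    using ret_spec(3)[OF pX, of k] i(2) unfolding p_def by simp
  have ap: "a = Tpow (int i) p" using i(3) i(2) unfolding next_start_def p_def a_def by simp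
  have "offset k (Tpow (-1) a) = i - 1"
  proof (rule offset_eqI)
    have "Tpow (- int (i - 1)) (Tpow (-1) a) = p" unfolding ap using i(1)
      by (simp add: Tpow_add of_nat_diff)
    then show "Tpow (- int (i - 1)) (Tpow (-1) a) \<in> base k" using i(4) base_Suc_subset
      unfolding p_def by auto
    show "\<forall>i'<i - 1. Tpow (- int i') (Tpow (-1) a) \<notin> base k"
    proof (intro allI impI)
      fix i' assume i': "i' < i - 1"
      have "Tpow (- int i') (Tpow (-1) a) = Tpow (int (i - 1 - i')) p" unfolding ap using i'
        by (simp add: Tpow_add of_nat_diff) (rule arg_cong[where f="\<lambda>z. Tpow z p"]; simp)
      moreover have "0 < i - 1 - i'" "i - 1 - i' < i" using i' by auto
      ultimately show "Tpow (- int i') (Tpow (-1) a) \<notin> base k" using hp by metis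
    qed
  qed
  then have "block_start k (Tpow (-1) a) = p" unfolding block_start_def ap using i(1)
    by (simp add: Tpow_add of_nat_diff)
  then show ?thesis unfolding p_def a_def by simp
qed

lemma block_start_Suc_cong: assumes "w1 \<in> Xh" "w2 \<in> Xh" "block_start k w1 = block_start k w2"
  shows "block_start (Suc k) w1 = block_start (Suc k) w2"
proof (cases "block_start k w1 \<in> joined k")
  case True
  then show ?thesis
    using block_start_Suc_joined[OF assms(1) True] block_start_Suc_joined[OF assms(2)] assms(3)
    by simp
next
  case False
  then show ?thesis
    using block_start_Suc_not_joined[OF assms(1) False]
      block_start_Suc_not_joined[OF assms(2)] assms(3) by simp
qed

text \<open>Every orbit point eventually leaves the bases, so the block of \<open>x\<close> eventually contains
  any given point of its orbit.\<close>

lemma block_covers_offset: assumes x: "x \<in> Xh"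
  shows "\<exists>n\<ge>m. 0 \<le> int (offset n x) + j \<and> int (offset n x) + j < int (ret n (block_start n x))"
proof (cases "0 \<le> j")
  case True
  obtain n where n: "n \<ge> m" "\<forall>i\<in>{1..j}. Tpow i x \<notin> base n"
    using Xh_avoid_base[OF x, of "{1..j}" m] by auto
  have "int (offset n x) + j < int (ret n (block_start n x))"
  proof (rule ccontr)
    assume "\<not> ?thesis"
    then have le: "int (ret n (block_start n x)) \<le> int (offset n x) + j" by simp
    define h where "h = ret n (block_start n x)"
    have h: "0 < h" "Tpow (int h) (block_start n x) \<in> base n" unfolding h_def
      using ret_spec[OF block_start_Xh[OF x]] by auto
    have eq: "Tpow (int h) (block_start n x) = Tpow (int h - int (offset n x)) x"
      unfolding block_start_def by (intro Tpow_add_eq) simp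
    consider "h < offset n x" | "h = offset n x" | "offset n x < h" by linarith
    then show False
    proof cases
      case 1
      have "Tpow (int h - int (offset n x)) x = Tpow (- int (offset n x - h)) x" using 1
        by (simp add: of_nat_diff)
      moreover have "offset n x - h < offset n x" using 1 h(1) by simp
      ultimately show False using offset_spec(2)[OF x, of n] h(2) eq by metis
    next
      case 2
      then have "x \<in> base n" using h(2) eq by simp
      moreover have "0 < offset n x" using 2 h(1) by simp
      ultimately show False using offset_spec(2)[OF x, of n]
        by (metis Tpow_0 of_nat_0 neg_0_equal_iff_equal)
    next
      case 3
      have "int h - int (offset n x) \<in> {1..j}" using 3 le unfolding h_def by auto
      then show False using n(2) h(2) eq by metis
    qed
  qed
  then show ?thesis using n(1) True by (intro exI[of _ n]) auto
next
  case False
  obtain n where n: "n \<ge> m" "\<forall>i\<in>{j+1..0}. Tpow i x \<notin> base n"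
    using Xh_avoid_base[OF x, of "{j+1..0}" m] by auto
  have "- j \<le> int (offset n x)"
  proof (rule ccontr)
    assume "\<not> ?thesis"
    then have "- int (offset n x) \<in> {j+1..0}" by auto
    then show False using n(2) offset_spec(1)[OF x, of n] by metis
  qed
  moreover have "offset n x < ret n (block_start n x)" using offset_less_ret[OF x] .
  ultimately show ?thesis using n(1) False by (intro exI[of _ n]) auto
qed

lemma measurable_offset: "offset n \<in> measurable borel (count_space UNIV)"
proof -
  have "(\<lambda>w. LEAST i. Tpow (- int i) w \<in> base n) \<in> measurable borel (count_space UNIV)"
    by (rule measurable_Least) measurable
  then show ?thesis unfolding offset_def[abs_def] .
qed

lemma measurable_ret: "ret n \<in> measurable borel (count_space UNIV)"
proof -
  have "(\<lambda>w. LEAST i. 0 < i \<and> Tpow (int i) w \<in> base n) \<in> measurable borel (count_space UNIV)"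
    by (rule measurable_Least) measurable
  then show ?thesis unfolding ret_def[abs_def] .
qed

lemma measurable_block_start: "block_start n \<in> borel_measurable borel"
proof -
  have "(\<lambda>w. (\<lambda>i w. Tpow (- int i) w) (offset n w) w) \<in> borel_measurable borel"
    by (rule measurable_compose_countable'[OF _ measurable_offset]) auto
  then show ?thesis unfolding block_start_def[abs_def] by simp
qed

lemma measurable_next_start: "next_start n \<in> borel_measurable borel"
proof -
  have "(\<lambda>w. (\<lambda>i w. Tpow (int i) w) (ret n w) w) \<in> borel_measurable borel"
    by (rule measurable_compose_countable'[OF _ measurable_ret]) auto
  then show ?thesis unfolding next_start_def[abs_def] by simp
qed

section \<open>The coding map\<close>

text \<open>The shape of the block of stage \<open>n\<close> starting at \<open>a\<close>: at each stage a block is either kept or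
  joined with the next block.\<close>

fun block_vertex :: "nat \<Rightarrow> 'a \<Rightarrow> uavert" where
  "block_vertex 0 a = Root"
| "block_vertex (Suc n) a =
     (if next_start n a \<in> joined n
      then Pair (block_vertex n a) (block_vertex n (next_start n a))
      else Cp (block_vertex n a))"

lemma block_vertex_level: "block_vertex n a \<in> UA_level n"
  by (induction n arbitrary: a) auto

lemma ret_0: "ret 0 a = 1"
  by (rule ret_eqI) (auto simp: base_0)

lemma dim_block_vertex: "a \<in> Xh \<Longrightarrow> a \<in> base n \<Longrightarrow> dim (block_vertex n a) = ret n a"
proof (induction n arbitrary: a)
  case 0 then show ?case by (simp add: ret_0)
next
  case (Suc n)
  have aL: "a \<in> base n" using Suc.prems(2) base_Suc_subset by blast
  show ?case
  proof (cases "next_start n a \<in> joined n")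
    case True
    have "dim (block_vertex (Suc n) a)
        = dim (block_vertex n a) + dim (block_vertex n (next_start n a))"
      using True by simp
    also have "\<dots> = ret n a + ret n (next_start n a)"
      using Suc.IH[OF Suc.prems(1) aL]
        Suc.IH[OF next_start_Xh[OF Suc.prems(1)] next_start_base[OF Suc.prems(1)]] by simp
    also have "\<dots> = ret (Suc n) a" using ret_Suc_joined[OF Suc.prems True] by simp
    finally show ?thesis .
  next
    case False
    then show ?thesis using Suc.IH[OF Suc.prems(1) aL] ret_Suc_not_joined[OF Suc.prems False]
    by simp
  qed
qed

lemma Tpow_less_ret_in_base_iff:
  assumes "a \<in> Xh" "a \<in> base n" "r < ret n a"
  shows "Tpow (int r) a \<in> base n \<longleftrightarrow> r = 0"
  using ret_spec(3)[OF assms(1), of n] assms(2,3) by (cases r) auto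

lemma base_positions_iff:
  assumes "a \<in> Xh" "a \<in> base k" "m \<le> k" "r < ret k a"
  shows "Tpow (int r) a \<in> base m \<longleftrightarrow> r \<in> base_positions k m (block_vertex k a)"
  using assms
proof (induction k arbitrary: a r)
  case 0
  then show ?case by (simp add: ret_0 base_0)
next
  case (Suc k)
  note a = Suc.prems(1,2)
  have aL: "a \<in> base k" using a(2) base_Suc_subset by blast
  show ?case
  proof (cases "m = Suc k")
    case True
    then show ?thesis using Tpow_less_ret_in_base_iff[OF a Suc.prems(4)] by simp
  next
    case m: False
    then have "m \<le> k" using Suc.prems(3) by simp
    note IH = Suc.IH[OF _ _ this]
    show ?thesis
    proof (cases "next_start k a \<in> joined k")
      case False
      then show ?thesis
        using IH[OF a(1) aL] ret_Suc_not_joined[OF a False] Suc.prems(4) m by simp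
    next
      case True
      define c where "c = next_start k a"
      have c: "c \<in> Xh" "c \<in> base k"
        unfolding c_def using next_start_Xh[OF a(1)] next_start_base[OF a(1)] by auto
      have dim: "dim (block_vertex k a) = ret k a" using dim_block_vertex[OF a(1) aL] .
      have pos: "base_positions (Suc k) m (block_vertex (Suc k) a)
          = base_positions k m (block_vertex k a) \<union> (\<lambda>r. ret k a + r) ` base_positions k m (block_vertex k c)"
        using m True dim unfolding c_def by simp
      show ?thesis
      proof (cases "r < ret k a")
        case True
        then show ?thesis using IH[OF a(1) aL True] pos by auto
      next
        case False
        then obtain r' where r: "r = ret k a + r'" using le_Suc_ex not_less by blast
        have "r' < ret k c"
          using Suc.prems(4) ret_Suc_joined[OF a True] r unfolding c_def by simp
        moreover have "Tpow (int r) a = Tpow (int r') c"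
          unfolding r c_def next_start_def by (intro Tpow_add_eq[symmetric]) simp
        moreover have "r \<notin> base_positions k m (block_vertex k a)"
          using base_positions_less_dim[of r k m "block_vertex k a"] dim r by auto
        ultimately show ?thesis using IH[OF c] pos r by auto
      qed
    qed
  qed
qed

lemma measurable_block_vertex: "block_vertex n \<in> borel \<rightarrow>\<^sub>M count_space UNIV"
proof (induction n)
  case 0 then show ?case by simp
next
  case (Suc n)
  have "(\<lambda>a. block_vertex n (next_start n a)) \<in> borel \<rightarrow>\<^sub>M count_space UNIV"
    using measurable_compose[OF measurable_next_start Suc] by simp
  then have "(\<lambda>a. Pair (block_vertex n a) (block_vertex n (next_start n a))) \<in> borel \<rightarrow>\<^sub>M count_space UNIV"
    by (rule measurable_count_space_app2[OF Suc])
  moreover have "(\<lambda>a. Cp (block_vertex n a)) \<in> borel \<rightarrow>\<^sub>M count_space UNIV"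
    using measurable_compose[OF Suc, of Cp "count_space UNIV"] by simp
  moreover have "{a \<in> space borel. next_start n a \<in> joined n} \<in> sets borel"
    using measurable_sets[OF measurable_next_start joined_measurable] by (simp add: vimage_def)
  ultimately show ?case by (simp add: measurable_If)
qed

text \<open>The edge of level \<open>k\<close> of \<open>Phi w\<close> enters the shape of the block of stage \<open>k + 1\<close> containing
  \<open>w\<close>; its label tells whether \<open>w\<close> lies in the second of the two blocks joined to form it.\<close>

definition Phi :: "'a \<Rightarrow> nat \<Rightarrow> uaedge" where
  "Phi w = (\<lambda>k. (block_vertex (Suc k) (block_start (Suc k) w), block_start k w \<in> joined k))"

lemma Phi_UA_paths: assumes w: "w \<in> Xh" shows "Phi w \<in> UA_paths"
  unfolding UA_paths_def
proof (intro CollectI conjI allI)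
  fix k
  show "fst (Phi w k) \<in> UA_level (Suc k)" unfolding Phi_def using block_vertex_level by simp
  show "valid_label (fst (Phi w k)) (snd (Phi w k))"
  proof (cases "block_start k w \<in> joined k")
    case True
    have "next_start k (block_start (Suc k) w) = block_start k w"
      using offset_Suc_joined[OF w True] by metis
    then show ?thesis unfolding Phi_def using True by simp
  next
    case False
    then show ?thesis unfolding Phi_def by simp
  qed
  show "edge_src (Phi w (Suc k)) = fst (Phi w k)"
  proof (cases "block_start (Suc k) w \<in> joined (Suc k)")
    case True
    have "next_start (Suc k) (block_start (Suc (Suc k)) w) = block_start (Suc k) w"
      using offset_Suc_joined[OF w True] by metis
    then show ?thesis unfolding Phi_def using True by simp
  next
    case False
    then show ?thesis unfolding Phi_def using block_start_Suc_not_joined[OF w False] by simp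
  qed
next
  show "edge_src (Phi w 0) = Root" unfolding Phi_def by simp
qed

lemma measurable_Phi_coord: "(\<lambda>w. Phi w k) \<in> measurable borel (count_space UNIV)"
proof -
  have v: "(\<lambda>w. block_vertex (Suc k) (block_start (Suc k) w)) \<in> measurable borel (count_space UNIV)"
    using measurable_compose[OF measurable_block_start[of "Suc k"] measurable_block_vertex[of "Suc k"]]
      by (simp del: block_vertex.simps)
  have "block_start k -` joined k \<in> sets borel"
    using measurable_sets[OF measurable_block_start joined_measurable] by simp
  then have b: "(\<lambda>w. block_start k w \<in> joined k) \<in> measurable borel (count_space UNIV)"
    unfolding pred_def by (simp add: vimage_def)
  show ?thesis unfolding Phi_def by (rule measurable_count_space_app2[OF v b])
qed

lemma measurable_Phi: "Phi \<in> measurable (restrict_space borel Xh) UA_path_space"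
  unfolding UA_path_space_def
proof (rule measurable_restrict_space2)
  show "Phi \<in> space (restrict_space borel Xh) \<rightarrow> UA_paths"
    using Phi_UA_paths by (auto simp: space_restrict_space)
  have "Phi \<in> measurable borel (PiM UNIV (\<lambda>_. count_space UNIV))"
    by (rule measurable_PiM_single') (auto simp: measurable_Phi_coord)
  then show "Phi \<in> measurable (restrict_space borel Xh) (PiM UNIV (\<lambda>_. count_space UNIV))"
    by (rule measurable_restrict_space1)
qed

lemma path_position_Phi: assumes w: "w \<in> Xh" shows "path_position (Phi w) k = offset k w"
proof (induction k)
  case 0
  have "offset 0 w = 0" by (rule offset_eqI) (auto simp: base_0)
  then show ?case by simp
next
  case (Suc k)
  show ?case
  proof (cases "block_start k w \<in> joined k")
    case True
    obtain i where i: "0 < i" "offset (Suc k) w = offset k w + i"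
      "ret k (block_start (Suc k) w) = i" "next_start k (block_start (Suc k) w) = block_start k w"
      "block_start (Suc k) w \<in> base (Suc k)"
      by (rule offset_Suc_joined[OF w True])
    define p where "p = block_start (Suc k) w"
    have pL: "p \<in> base k" using i(5) base_Suc_subset unfolding p_def by blast
    have pX: "p \<in> Xh" unfolding p_def using block_start_Xh[OF w] .
    have "block_vertex (Suc k) p = Pair (block_vertex k p) (block_vertex k (block_start k w))"
      using i(4) True unfolding p_def by simp
    then have "dim (left_factor (fst (Phi w k))) = dim (block_vertex k p)" unfolding Phi_def p_def
    by simp
    also have "\<dots> = i" using dim_block_vertex[OF pX pL] i(3) unfolding p_def by simp
    finally show ?thesis using Suc.IH True i(2) unfolding Phi_def by simp
  next
    case False
    then show ?thesis using Suc.IH offset_Suc_not_joined[OF w False] unfolding Phi_def by simp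
  qed
qed

lemma Phi_eq_imp_block_vertex_eq: assumes "Phi x = Phi y"
  shows "block_vertex n (block_start n x) = block_vertex n (block_start n y)"
proof (cases n)
  case 0 then show ?thesis by simp
next
  case (Suc k)
  have "fst (Phi x k) = fst (Phi y k)" using assms by simp
  then show ?thesis unfolding Phi_def Suc by simp
qed

lemma Phi_eq_imp_same_base_visits: assumes x: "x \<in> Xh" and y: "y \<in> Xh" and eq: "Phi x = Phi y"
  shows "Tpow j x \<in> base m \<longleftrightarrow> Tpow j y \<in> base m"
proof -
  obtain n where n: "n \<ge> m" "0 \<le> int (offset n x) + j"
    "int (offset n x) + j < int (ret n (block_start n x))"
    using block_covers_offset[OF x] by blast
  have offset: "offset n x = offset n y"
    using path_position_Phi[OF x, of n] path_position_Phi[OF y, of n] eq by simp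
  have vv: "block_vertex n (block_start n x) = block_vertex n (block_start n y)"
    using Phi_eq_imp_block_vertex_eq[OF eq] .
  have hh: "ret n (block_start n x) = ret n (block_start n y)"
    using dim_block_vertex[OF block_start_Xh[OF x] block_start_base[OF x, of n]]
      dim_block_vertex[OF block_start_Xh[OF y] block_start_base[OF y, of n]] vv by simp
  define r where "r = nat (int (offset n x) + j)"
  have r: "int r = int (offset n x) + j" unfolding r_def using n(2) by simp
  have rlt: "r < ret n (block_start n x)" using n(3) r by linarith
  have ex: "Tpow (int r) (block_start n x) = Tpow j x" unfolding block_start_def
    by (intro Tpow_add_eq) (simp add: r)
  have ey: "Tpow (int r) (block_start n y) = Tpow j y" unfolding block_start_def
    by (intro Tpow_add_eq) (simp add: r offset)
  have "Tpow j x \<in> base m \<longleftrightarrow> r \<in> base_positions n m (block_vertex n (block_start n x))"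
    using base_positions_iff[OF block_start_Xh[OF x] block_start_base[OF x] n(1) rlt] ex by simp
  moreover have "Tpow j y \<in> base m \<longleftrightarrow> r \<in> base_positions n m (block_vertex n (block_start n y))"
  proof -
    have "r < ret n (block_start n y)" using rlt hh by simp
    from base_positions_iff[OF block_start_Xh[OF y] block_start_base[OF y] n(1) this] show ?thesis
      using ey by simp
  qed
  ultimately show ?thesis using vv by simp
qed

text \<open>Let \<open>U k\<close> separate \<open>x\<close> from \<open>y\<close> and let \<open>b = T\<^sup>d x\<close>, \<open>0 < d \<le> 2^k\<close>, be a marker of step \<open>k\<close>.
  It is dropped at some step \<open>g' \<ge> k\<close>, at the stage of its pattern; as \<open>\<Phi> x = \<Phi> y\<close>, so is
  \<open>T\<^sup>d y\<close>, at the same stage, and their common pattern decides whether \<open>x\<close> and \<open>y\<close> lie in \<open>U k\<close>.\<close>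

lemma Phi_inj: assumes x: "x \<in> Xh" and y: "y \<in> Xh" and eq: "Phi x = Phi y" shows "x = y"
proof (rule ccontr)
  assume "x \<noteq> y"
  then obtain k where k: "x \<in> U k" "y \<notin> U k" using U_separates by blast
  obtain d where d: "0 < d" "d \<le> 2 ^ k" "Tpow (int d) x \<in> marker k"
    using Xh_marker_near[OF x] by blast
  define b where "b = Tpow (int d) x"
  have bX: "b \<in> Xh" unfolding b_def using Tpow_in_Xh[OF x] .
  obtain g' where g': "g' \<ge> k" "b \<in> dropped g'"
    using marker_eventually_dropped[OF bX d(3)[folded b_def]] by blast
  obtain n where n: "stage n = (g', pattern g' b)" using stage_exists[OF pattern_less] by blast
  have "b \<in> joined n" using joined_eq[OF n] g'(2) by simp
  then have "Tpow (int d) y \<in> joined n" unfolding b_def joined_def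
    using Phi_eq_imp_same_base_visits[OF x y eq] by blast
  then have yS: "Tpow (int d) y \<in> dropped g'" "pattern g' (Tpow (int d) y) = pattern g' b"
    using joined_eq[OF n] by auto
  have "d \<le> 2 ^ g'" using d(2) power_increasing[OF g'(1), of "2::nat"] by (rule le_trans) simp
  then have "int d \<le> 2 ^ g'" by (metis of_nat_le_iff of_nat_numeral of_nat_power)
  then have "- (2 ^ g') \<le> - int d" "- int d \<le> (2::int) ^ g'"
    by (linarith, smt (verit) of_nat_0_le_iff zero_le_power)
  then have "(k, - int d) \<in> window g'" unfolding window_def using g'(1) by simp
  from pattern_eq_imp_same_visits[OF yS(2)[symmetric] this]
  have "(Tpow (- int d) b \<in> U k) = (Tpow (- int d) (Tpow (int d) y) \<in> U k)" by simp
  moreover have "Tpow (- int d) b = x" "Tpow (- int d) (Tpow (int d) y) = y" unfolding b_def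
    by (simp_all add: Tpow_add)
  ultimately show False using k by simp
qed

lemma left_edge_Phi: assumes x: "x \<in> Xh" and Tx: "T x \<in> joined k"
  shows "left_edge (Phi x) k"
proof -
  have TxL: "T x \<in> base k" using Tx by (simp add: joined_def)
  have nx: "next_start k (block_start k x) = T x" "ret k (block_start k x) = offset k x + 1"
    using last_block[OF x TxL] by auto
  have "block_start k x \<notin> joined k"
  proof
    assume a: "block_start k x \<in> joined k"
    note h = ret_spec[OF block_start_Xh[OF x, of k], of k]
    have "Tpow (int (ret k (block_start k x))) (block_start k x) \<notin> joined k"
      using joined_next_base_not_joined[OF a h] .
    then show False using nx Tx unfolding next_start_def by simp
  qed
  moreover then have "block_start (Suc k) x = block_start k x"
    using block_start_Suc_not_joined[OF x] by simp
  ultimately show ?thesis unfolding left_edge_def Phi_def using nx Tx by simp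
qed

lemma T_in_base_below_left_edges:
  assumes x: "x \<in> Xh" and below: "\<forall>k<j. \<not> left_edge (Phi x) k"
    shows "T x \<in> base j"
  using below
proof (induction j)
  case 0 show ?case by (simp add: base_0)
next
  case (Suc j)
  then have "T x \<in> base j" by simp
  moreover have "T x \<notin> joined j" using left_edge_Phi[OF x] Suc.prems by blast
  ultimately show ?case unfolding joined_def by simp
qed

lemma Phi_first_left_edge:
  assumes x: "x \<in> Xh"
  obtains j where "left_edge (Phi x) j" "\<forall>k<j. \<not> left_edge (Phi x) k" "T x \<in> joined j"
proof -
  obtain n where n: "T x \<notin> base n" using Xh_leaves_base[OF T_in_Xh[OF x]] by blast
  have "\<exists>k. left_edge (Phi x) k"
  proof (rule ccontr)
    assume "\<not> (\<exists>k. left_edge (Phi x) k)"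
    then show False using T_in_base_below_left_edges[OF x, of n] n by blast
  qed
  from ex_least[OF this] obtain j where j: "left_edge (Phi x) j" "\<forall>k<j. \<not> left_edge (Phi x) k"
  by blast
  have Tx: "T x \<in> base j" using T_in_base_below_left_edges[OF x j(2)] .
  from j(1) have ns: "block_start j x \<notin> joined j" unfolding left_edge_def Phi_def by simp
  have "next_start j (block_start j x) \<in> joined j"
  proof (rule ccontr)
    assume "next_start j (block_start j x) \<notin> joined j"
    then have "fst (Phi x j) = Cp (block_vertex j (block_start j x))"
      unfolding Phi_def block_start_Suc_not_joined[OF x ns] by simp
    then show False using j(1) unfolding left_edge_def by simp
  qed
  then have "T x \<in> joined j" using last_block(2)[OF x Tx] by simp
  with j show ?thesis using that by blast
qed

lemma Phi_T_adic_shift: assumes x: "x \<in> Xh"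
  shows "Phi x \<in> adic_dom" "Phi (T x) = adic_shift (Phi x)"
proof -
  have Tx: "T x \<in> Xh" using T_in_Xh[OF x] .
  obtain j where j: "left_edge (Phi x) j" "\<forall>k<j. \<not> left_edge (Phi x) k" and TS: "T x \<in> joined j"
    using Phi_first_left_edge[OF x] .
  have TL: "T x \<in> base k" if "k \<le> j" for k
    using T_in_base_below_left_edges[OF x] j(2) that by simp
  from j(1) obtain u v where uv: "fst (Phi x j) = Pair u v" "\<not> snd (Phi x j)"
    unfolding left_edge_def by blast
  have lx: "block_start (Suc j) x = block_start j x"
    using uv(2) block_start_Suc_not_joined[OF x] unfolding Phi_def by simp
  have ltx: "block_start (Suc j) (T x) = block_start (Suc j) x"
  proof -
    have "block_start j (T x) = T x" using block_start_self TL by simp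
    then have "block_start (Suc j) (T x) = block_start j (Tpow (-1) (T x))"
      using block_start_Suc_joined[OF Tx] TS by simp
    also have "Tpow (-1) (T x) = x" using Tpow_add[of "-1" 1 x] by (simp add: Tpow_1)
    finally show ?thesis using lx by simp
  qed
  have above: "\<forall>k>j. Phi (T x) k = Phi x k"
  proof -
    have "block_start k (T x) = block_start k x" if "Suc j \<le> k" for k
      using that
    proof (induction k rule: dec_induct)
      case base then show ?case by (rule ltx)
    next
      case (step k) then show ?case using block_start_Suc_cong[OF Tx x] by simp
    qed
    then show ?thesis unfolding Phi_def by simp
  qed
  have qj: "Phi (T x) j = (Pair u v, True)"
  proof -
    have "block_start j (T x) = T x" using block_start_self TL by simp
    then have "snd (Phi (T x) j)" unfolding Phi_def using TS by simp
    moreover have "fst (Phi (T x) j) = fst (Phi x j)" unfolding Phi_def using ltx by simp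
    ultimately show ?thesis using uv(1) by (simp add: prod_eq_iff)
  qed
  have qbelow: "\<forall>k<j. \<not> snd (Phi (T x) k)"
  proof (intro allI impI)
    fix k assume "k < j"
    have "block_start k (T x) = T x" using block_start_self TL \<open>k < j\<close> by simp
    moreover have "T x \<in> base (Suc k)" using TL \<open>k < j\<close> by simp
    ultimately show "\<not> snd (Phi (T x) k)" unfolding Phi_def joined_def by simp
  qed
  show "Phi x \<in> adic_dom" "Phi (T x) = adic_shift (Phi x)"
    using adic_shift_eqI[OF Phi_UA_paths[OF x] Phi_UA_paths[OF Tx] uv qj above j(2) qbelow] by auto
qed

lemma adic_embedding:
  "\<exists>Xh \<Phi>. metrically_universal T Xh
     \<and> \<Phi> \<in> measurable (restrict_space borel Xh) UA_path_space
     \<and> inj_on \<Phi> Xh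
     \<and> (\<forall>x\<in>Xh. T x \<in> Xh \<and> \<Phi> x \<in> adic_dom \<and> \<Phi> (T x) = adic_shift (\<Phi> x))"
  using metrically_universal_Xh measurable_Phi Phi_inj T_in_Xh Phi_T_adic_shift
  by (intro exI[of _ Xh] exI[of _ Phi]) (auto intro: inj_onI)

end

theorem theorem1:
  fixes T :: "'a::metric_space \<Rightarrow> 'a"
  assumes "separable_space (euclidean :: 'a topology)"
    and "borel_automorphism T"
    and "aperiodic T"
  shows "\<exists>Xh \<Phi>. metrically_universal T Xh
           \<and> \<Phi> \<in> measurable (restrict_space borel Xh) UA_path_space
           \<and> inj_on \<Phi> Xh
           \<and> (\<forall>x\<in>Xh. T x \<in> Xh \<and> \<Phi> x \<in> adic_dom \<and> \<Phi> (T x) = adic_shift (\<Phi> x))"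
proof -
  obtain U :: "nat \<Rightarrow> 'a set"
    where U: "\<forall>k. open (U k)" "\<forall>x y. x \<noteq> y \<longrightarrow> (\<exists>k. x \<in> U k \<and> y \<notin> U k)"
    using separable_separating_opens[OF assms(1)] by blast
  have "x \<notin> periodic_points T" for x
    using assms(3) unfolding aperiodic_def by simp
  then have "(T ^^ n) x \<noteq> x" if "0 < n" for x n
    using that unfolding periodic_points_def by blast
  moreover have "bij T" "T \<in> borel_measurable borel" "inv T \<in> borel_measurable borel"
    using assms(2) unfolding borel_automorphism_def by auto
  ultimately interpret marker_construction T U
    using U by unfold_locales auto
  show ?thesis by (rule adic_embedding)
qed

end
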